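(* Let $f\in\mathcal{C}^{2r}(-b,b)$ ($b>0$, $r\ge1$ integer) with $f^{(2\ell-1)}(0)=0$ for $1\le\ell<r$ and $f^{(2r-1)}(0)\neq0$; write $f_k=f^{(k)}(0)/k!$. Let $x_1,\ldots,x_n\in\mathbb{R}$ with $r\le n$, and $\mathbf{K}_\varepsilon=[f(\varepsilon|x_i-x_j|)]_{i,j=1}^n$. Assume that for some $\varepsilon_0>0$, $\mathbf{K}_\varepsilon$ is positive semidefinite for $\varepsilon\in[0,\varepsilon_0]$, and that $\varepsilon\mapsto\mathbf{K}_\varepsilon$ is analytic near $0$. Let $\lambda_1(\varepsilon)\ge\cdots\ge\lambda_n(\varepsilon)$ be its eigenvalues for small $\varepsilon>0$, written $\lambda_s(\varepsilon)=\varepsilon^{2(s-1)}(\widetilde\lambda_s+\mathcal{O}(\varepsilon))$ for $s\le r$ and $\lambda_s(\varepsilon)=\varepsilon^{2r-1}(\widetilde\lambda_s+\mathcal{O}(\varepsilon))$ for $s>r$, and let $\mathbf{p}_1,\ldots,\mathbf{p}_n$ be the corresponding limiting eigenvectors. Then: 1. For $1\le s\le r$, $\widetilde\lambda_1\cdots\widetilde\lambda_s=\det(\mathbf{V}_{\le s-1}^\top\mathbf{V}_{\le s-1})\det(\mathbf{W}_{s-1})$. In particular, if $1<s\le r$ and $\det\mathbf{W}_{s-2}\neq0$, then \[\widetilde\lambda_s=\frac{\det(\mathbf{V}_{\le s-1}^\top\mathbf{V}_{\le s-1})}{\det(\mathbf{V}_{\le s-2}^\top\mathbf{V}_{\le s-2})}\cdot\frac{\det\mathbf{W}_{s-1}}{\det\mathbf{W}_{s-2}}.\]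 2. If the points $x_i$ are distinct and, for $1\le s\le r$, $\det\mathbf{W}_{s-1}\neq0$, then $\mathbf{p}_1,\ldots,\mathbf{p}_s$ are (up to sign) the first $s$ columns of the orthogonal factor $\mathbf{Q}_{\rm full}$ of a full QR factorization of $\mathbf{V}_{\le s-1}$. In particular, if $\det\mathbf{W}_{r-1}\neq0$, the last $n-r$ limiting eigenvectors $\mathbf{p}_{r+1},\ldots,\mathbf{p}_n$ span the column space of $\mathbf{Q}_\perp$. 3. If $\det\mathbf{W}_{r-1}\neq0$ and the points $x_i$ are distinct, then $\widetilde\lambda_{r+1},\ldots,\widetilde\lambda_n$ are the eigenvalues of $f_{2r-1}\mathbf{Q}_\perp^\top\mathbf{D}_{(2r-1)}\mathbf{Q}_\perp$. Here $\mathbf{Q}_\perp\in\mathbb{R}^{n\times(n-r)}$ consists of the last $n-r$ columns of the orthogonal factor of a full QR factorization of $\mathbf{V}_{\le r-1}$.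
   Context: Vandermonde: $\mathbf{V}_{\le k}=[x_i^{j}]_{1\le i\le n,\,0\le j\le k}$. Distance powers: $\mathbf{D}_{(k)}=[|x_i-x_j|^k]_{i,j=1}^n$. Wronskian: $\mathbf{W}_{k}$ is the $(k+1)\times(k+1)$ matrix with $(i,j)$ entry $\frac{K^{(i,j)}(0,0)}{i!j!}=(-1)^j\binom{i+j}{j}f_{i+j}$, $0\le i,j\le k$, where $K(x,y)=f(|x-y|)$. Full QR factorization of $\mathbf{V}\in\mathbb{R}^{n\times m}$: $\mathbf{V}=\mathbf{Q}_{\rm full}\begin{bmatrix}\mathbf{R}\\\mathbf{0}\end{bmatrix}$ with $\mathbf{Q}_{\rm full}$ orthogonal $n\times n$ and $\mathbf{R}$ upper triangular. Limiting eigenvectors: for a matrix function analytic in $\varepsilon$ and symmetric for real $\varepsilon$, eigenvalues $\lambda_k(\varepsilon)$ and orthogonal rank-one eigenprojectors $\mathbf{P}_k(\varepsilon)$ can be chosen analytic near $0$; the limiting eigenvector $\mathbf{p}_k$ is a unit vector with $\mathbf{P}_k(0)=\mathbf{p}_k\mathbf{p}_k^\top$ (up to sign). *)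

theory Defs
  imports Complex_Main "HOL-Analysis.Derivative" "Jordan_Normal_Form.Matrix" "Jordan_Normal_Form.Determinant"
    "Jordan_Normal_Form.Char_Poly"
begin

definition C_k_on :: "nat \<Rightarrow> (real \<Rightarrow> real) \<Rightarrow> real set \<Rightarrow> bool" where
  "C_k_on k f S \<longleftrightarrow>
     (\<forall>j<k. \<forall>t\<in>S. (deriv ^^ j) f differentiable (at t)) \<and> continuous_on S ((deriv ^^ k) f)"

definition tcoef :: "(real \<Rightarrow> real) \<Rightarrow> nat \<Rightarrow> real" where
  "tcoef f k = (deriv ^^ k) f 0 / fact k"

definition real_analytic_near0 :: "(real \<Rightarrow> real) \<Rightarrow> bool" where
  "real_analytic_near0 g \<longleftrightarrow>
     (\<exists>c \<delta>. \<delta> > 0 \<and> (\<forall>t. \<bar>t\<bar> < \<delta> \<longrightarrow> (\<lambda>k. c k * t ^ k) sums g t))"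

definition mat_analytic_near0 :: "nat \<Rightarrow> (real \<Rightarrow> real mat) \<Rightarrow> bool" where
  "mat_analytic_near0 n M \<longleftrightarrow>
     (\<forall>t. M t \<in> carrier_mat n n) \<and>
     (\<forall>i<n. \<forall>j<n. real_analytic_near0 (\<lambda>t. M t $$ (i,j)))"

text \<open>Kernel matrix K_eps = [f(eps |x_i - x_j|)], points indexed 0..n-1.\<close>
definition Kmat :: "(real \<Rightarrow> real) \<Rightarrow> nat \<Rightarrow> (nat \<Rightarrow> real) \<Rightarrow> real \<Rightarrow> real mat" where
  "Kmat f n x \<epsilon> = Matrix.mat n n (\<lambda>(i,j). f (\<epsilon> * \<bar>x i - x j\<bar>))"

definition Vand :: "nat \<Rightarrow> (nat \<Rightarrow> real) \<Rightarrow> nat \<Rightarrow> real mat" where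
  "Vand n x k = Matrix.mat n (k+1) (\<lambda>(i,j). x i ^ j)"

definition Dpow :: "nat \<Rightarrow> (nat \<Rightarrow> real) \<Rightarrow> nat \<Rightarrow> real mat" where
  "Dpow n x k = Matrix.mat n n (\<lambda>(i,j). \<bar>x i - x j\<bar> ^ k)"

definition Wron :: "(real \<Rightarrow> real) \<Rightarrow> nat \<Rightarrow> real mat" where
  "Wron f k = Matrix.mat (k+1) (k+1) (\<lambda>(i,j). (-1) ^ j * real ((i+j) choose j) * tcoef f (i+j))"

definition psd_mat :: "nat \<Rightarrow> real mat \<Rightarrow> bool" where
  "psd_mat n A \<longleftrightarrow> A \<in> carrier_mat n n \<and> transpose_mat A = A \<and>
     (\<forall>v\<in>carrier_vec n. scalar_prod v (A *\<^sub>v v) \<ge> 0)"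

definition outer :: "nat \<Rightarrow> real Matrix.vec \<Rightarrow> real mat" where
  "outer n v = Matrix.mat n n (\<lambda>(i,j). vec_index v i * vec_index v j)"

definition full_QR :: "real mat \<Rightarrow> real mat \<Rightarrow> bool" where
  "full_QR V Q \<longleftrightarrow> (let n = dim_row V; m = dim_col V in
     Q \<in> carrier_mat n n \<and> transpose_mat Q * Q = 1\<^sub>m n \<and>
     (\<exists>R. R \<in> carrier_mat m m \<and> upper_triangular R \<and>
          V = Q * Matrix.mat n m (\<lambda>(i,j). if i < m then R $$ (i,j) else 0)))"

definition last_cols :: "nat \<Rightarrow> real mat \<Rightarrow> real mat" where
  "last_cols k Q = Matrix.mat (dim_row Q) (dim_col Q - k) (\<lambda>(i,j). Q $$ (i, k + j))"

definition col_space :: "real mat \<Rightarrow> real Matrix.vec set" where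
  "col_space A = {A *\<^sub>v y | y. y \<in> carrier_vec (dim_col A)}"

text \<open>Order of the s-th eigenvalue (0-based s): 2s for s<r, 2r-1 otherwise.\<close>
definition eig_order :: "nat \<Rightarrow> nat \<Rightarrow> nat" where
  "eig_order r s = (if s < r then 2 * s else 2 * r - 1)"

end

theory Submission
  imports Defs
begin

(* Near eps = 0 the kernel form u^T K_eps w = sum_k lam_k(eps) <u, v_k(eps)> <w, v_k(eps)> is compared
   with its Taylor expansion sum_m f_m eps^m u^T D_(m) w. Below order 2r - 1 the odd coefficients f_m
   vanish, so u^T D_(m) w is a binomial combination of the moments <u, x^a> <w, x^(m-a)>.
   Let y_0, y_1, ... be the Gram-Schmidt orthonormalisation of 1, x, x^2, ... and rho_a = <y_a, x^a>.
   Then [y_a^T K_eps y_b / eps^(a+b)]_{a,b<s} tends to diag(rho) W_{s-1} diag(rho), while by the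
   eigen-expansion its determinant behaves like det [<y_a, p_t> <y_b, p_t>] * prod_{t<s} lam_t / eps^(2t).
   As det (V^T V) = prod rho_a^2, part 1 follows once p_t = +-y_t for t < s; this holds by induction on t,
   because a vector orthogonal to 1, ..., x^t has u^T K_eps u = O(eps^(2t+1)) and hence, when the
   leading coefficients are positive, is orthogonal to p_0, ..., p_t. This also gives part 2, since the
   columns of Q are a Gram-Schmidt basis up to signs.
   For part 3, vectors orthogonal to all monomials of degree < r see the eigenvalues lam_t, t < r, only
   through nonnegative analytic functions of odd order, which are negligible at order eps^(2r-1); hence
   f_(2r-1) Q_perp^T D_(2r-1) Q_perp is diag(lt_r, ..., lt_(n-1)) in an orthonormal basis. *)

section \<open>Real-analytic functions at 0\<close>

lemma real_analytic_near0_tendsto: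
  assumes "real_analytic_near0 g"
  shows "(g \<longlongrightarrow> g 0) (at 0)"
proof -
  from assms obtain c \<delta> where d: "\<delta> > 0" and s: "\<And>t. \<bar>t\<bar> < \<delta> \<Longrightarrow> (\<lambda>k. c k * t ^ k) sums g t"
    unfolding real_analytic_near0_def by blast
  have "(g \<longlongrightarrow> c 0) (at 0)"
    by (rule powser_limit_0[OF d]) (use s in simp)
  moreover have "(\<lambda>k. c k * 0 ^ k) sums g 0" using s[of 0] d by simp
  then have "g 0 = c 0" by simp
  ultimately show ?thesis by simp
qed

lemma real_analytic_near0_add_scaled:
  assumes "real_analytic_near0 g" "real_analytic_near0 h"
  shows "real_analytic_near0 (\<lambda>t. a * g t + h t)"
proof -
  from assms(1) obtain c \<delta> where d: "\<delta> > 0" and s: "\<And>t. \<bar>t\<bar> < \<delta> \<Longrightarrow> (\<lambda>k. c k * t ^ k) sums g t"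
    unfolding real_analytic_near0_def by blast
  from assms(2) obtain c' \<delta>' where d': "\<delta>' > 0" and s': "\<And>t. \<bar>t\<bar> < \<delta>' \<Longrightarrow> (\<lambda>k. c' k * t ^ k) sums h t"
    unfolding real_analytic_near0_def by blast
  show ?thesis unfolding real_analytic_near0_def
  proof (intro exI conjI allI impI)
    show "min \<delta> \<delta>' > 0" using d d' by simp
    fix t :: real assume "\<bar>t\<bar> < min \<delta> \<delta>'"
    then have "(\<lambda>k. a * (c k * t ^ k) + c' k * t ^ k) sums (a * g t + h t)"
      by (intro sums_add sums_mult s s') auto
    then show "(\<lambda>k. (a * c k + c' k) * t ^ k) sums (a * g t + h t)"
      by (simp add: algebra_simps)
  qed
qed

lemma real_analytic_near0_sum:
  assumes "finite I" "\<And>i. i \<in> I \<Longrightarrow> real_analytic_near0 (g i)"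
  shows "real_analytic_near0 (\<lambda>t. \<Sum>i\<in>I. a i * g i t)"
  using assms
proof (induction I rule: finite_induct)
  case empty
  show ?case unfolding real_analytic_near0_def
    by (rule exI[of _ "\<lambda>k. 0"], rule exI[of _ 1]) auto
next
  case (insert j I)
  have "real_analytic_near0 (\<lambda>t. a j * g j t + (\<Sum>i\<in>I. a i * g i t))"
    by (rule real_analytic_near0_add_scaled) (use insert in auto)
  then show ?case using insert by simp
qed

lemma powser_div_power_tendsto:
  fixes c :: "nat \<Rightarrow> real" and g :: "real \<Rightarrow> real"
  assumes d: "\<delta> > 0" and s: "\<And>t. \<bar>t\<bar> < \<delta> \<Longrightarrow> (\<lambda>j. c j * t ^ j) sums g t"
    and z: "\<And>j. j < k \<Longrightarrow> c j = 0"
  shows "((\<lambda>t. g t / t ^ k) \<longlongrightarrow> c k) (at 0)"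
proof -
  have "((\<lambda>t. g t / t ^ k) \<longlongrightarrow> (\<lambda>j. c (j + k)) 0) (at 0)"
  proof (rule powser_limit_0_strong[OF d])
    fix t :: real assume t: "t \<noteq> 0" "norm t < \<delta>"
    have "(\<lambda>j. c j * t ^ j) sums (g t)" using s t by auto
    then have "(\<lambda>j. c (j + k) * t ^ (j + k)) sums (g t - (\<Sum>i<k. c i * t ^ i))"
      by (subst sums_iff_shift) simp
    then have "(\<lambda>j. c (j + k) * t ^ (j + k) / t ^ k) sums (g t / t ^ k)"
      using z by (intro sums_divide) simp
    moreover have "\<And>j. c (j + k) * t ^ (j + k) / t ^ k = c (j + k) * t ^ j"
      using t by (simp add: power_add)
    ultimately show "(\<lambda>j. c (j + k) * t ^ j) sums (g t / t ^ k)" by simp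
  qed
  then show ?thesis by simp
qed

lemma tendsto_0_if_power_bound:
  fixes g :: "real \<Rightarrow> real"
  assumes "\<eta> > 0" "\<And>e. 0 < e \<Longrightarrow> e < \<eta> \<Longrightarrow> \<bar>g e\<bar> \<le> C * e ^ N" and "k < N"
  shows "((\<lambda>e. g e / e ^ k) \<longlongrightarrow> 0) (at_right 0)"
proof -
  have ev: "eventually (\<lambda>e. \<bar>g e / e ^ k\<bar> \<le> \<bar>C\<bar> * e ^ (N - k)) (at_right 0)"
    using eventually_at_right_real[OF assms(1)]
  proof (rule eventually_mono)
    fix e :: real assume "e \<in> {0<..<\<eta>}"
    then have e: "0 < e" "e < \<eta>" by auto
    have "\<bar>g e / e ^ k\<bar> = \<bar>g e\<bar> / e ^ k" using e by (simp add: abs_divide)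
    also have "\<dots> \<le> C * e ^ N / e ^ k"
      using assms(2)[OF e] e by (intro divide_right_mono) auto
    also have "\<dots> = C * e ^ (N - k)"
      using e \<open>k < N\<close> by (simp add: power_diff)
    also have "\<dots> \<le> \<bar>C\<bar> * e ^ (N - k)" using e by (intro mult_right_mono) auto
    finally show "\<bar>g e / e ^ k\<bar> \<le> \<bar>C\<bar> * e ^ (N - k)" .
  qed
  have "((\<lambda>e. \<bar>C\<bar> * e ^ (N - k)) \<longlongrightarrow> \<bar>C\<bar> * 0 ^ (N - k)) (at_right (0::real))"
    by (intro tendsto_intros)
  then have "((\<lambda>e. \<bar>C\<bar> * e ^ (N - k)) \<longlongrightarrow> 0) (at_right (0::real))"
    using \<open>k < N\<close> by (simp add: power_0_left)
  then show ?thesis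
    by (rule tendsto_0_le[of _ _ _ 1]) (use ev in \<open>auto elim: eventually_mono\<close>)
qed

lemma real_analytic_near0_order_tendsto:
  fixes g :: "real \<Rightarrow> real"
  assumes "real_analytic_near0 g"
    and "\<eta> > 0" "\<And>e. 0 < e \<Longrightarrow> e < \<eta> \<Longrightarrow> \<bar>g e\<bar> \<le> C * e ^ N"
  obtains c where "((\<lambda>t. g t / t ^ N) \<longlongrightarrow> c) (at 0)"
proof -
  from assms(1) obtain c \<delta> where d: "\<delta> > 0" and s: "\<And>t. \<bar>t\<bar> < \<delta> \<Longrightarrow> (\<lambda>k. c k * t ^ k) sums g t"
    unfolding real_analytic_near0_def by blast
  have cz: "c k = 0" if "k < N" for k
    using that
  proof (induction k rule: less_induct)
    case (less k)
    have "((\<lambda>t. g t / t ^ k) \<longlongrightarrow> c k) (at 0)"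
      by (rule powser_div_power_tendsto[OF d s]) (use less in auto)
    then have "((\<lambda>t. g t / t ^ k) \<longlongrightarrow> c k) (at_right 0)"
      by (simp add: filterlim_at_split)
    moreover have "((\<lambda>t. g t / t ^ k) \<longlongrightarrow> 0) (at_right 0)"
      by (rule tendsto_0_if_power_bound[OF assms(2,3) less.prems])
    ultimately show ?case using tendsto_unique[OF trivial_limit_at_right_real] by blast
  qed
  show thesis by (rule that[OF powser_div_power_tendsto[OF d s cz]])
qed

text \<open>A nonnegative analytic function vanishes to even order at 0, so a bound of odd order
  \<open>N\<close> on the right forces it to be \<open>o(e^N)\<close>.\<close>

lemma nonneg_analytic_odd_order_tendsto_0:
  fixes g :: "real \<Rightarrow> real" and N :: nat
  assumes an: "real_analytic_near0 g"
    and nonneg: "\<rho> > 0" "\<And>t. \<bar>t\<bar> < \<rho> \<Longrightarrow> g t \<ge> 0"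
    and oddN: "odd N"
    and bnd: "\<eta> > 0" "\<And>e. 0 < e \<Longrightarrow> e < \<eta> \<Longrightarrow> \<bar>g e\<bar> \<le> C * e ^ N"
  shows "((\<lambda>e. g e / e ^ N) \<longlongrightarrow> 0) (at_right 0)"
proof -
  obtain c where lim: "((\<lambda>t. g t / t ^ N) \<longlongrightarrow> c) (at 0)"
    using real_analytic_near0_order_tendsto[OF an bnd] .
  then have right: "((\<lambda>t. g t / t ^ N) \<longlongrightarrow> c) (at_right 0)"
    and left: "((\<lambda>t. g t / t ^ N) \<longlongrightarrow> c) (at_left 0)"
    by (simp_all add: filterlim_at_split)
  have "eventually (\<lambda>t. g t / t ^ N \<ge> 0) (at_right (0::real))"
    using eventually_at_right_real[OF nonneg(1)] by (rule eventually_mono) (use nonneg(2) in auto)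
  with right have "c \<ge> 0" by (rule tendsto_lowerbound) simp
  have "eventually (\<lambda>t. t \<in> {- \<rho><..<0}) (at_left (0::real))"
    using nonneg(1) by (intro eventually_at_left_real) simp
  then have "eventually (\<lambda>t. g t / t ^ N \<le> 0) (at_left (0::real))"
  proof (rule eventually_mono)
    fix t :: real assume t: "t \<in> {- \<rho><..<0}"
    then have "g t \<ge> 0" using nonneg(2) by auto
    moreover have "t ^ N < 0" using t oddN by (simp add: power_less_zero_eq)
    ultimately show "g t / t ^ N \<le> 0" by (simp add: divide_nonneg_neg)
  qed
  with left have "c \<le> 0" by (rule tendsto_upperbound) simp
  with \<open>c \<ge> 0\<close> right show ?thesis by simp
qed

section \<open>Taylor expansion with Peano remainder\<close>

lemma C_k_on_has_real_derivative:
  assumes sm: "C_k_on K f S" and m: "m < K" and t: "t \<in> S"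
  shows "((deriv ^^ m) f has_real_derivative (deriv ^^ Suc m) f t) (at t)"
proof -
  have "(deriv ^^ m) f differentiable (at t)" using sm m t unfolding C_k_on_def by blast
  then have "((deriv ^^ m) f has_real_derivative deriv ((deriv ^^ m) f) t) (at t)"
    using DERIV_deriv_iff_real_differentiable by blast
  then show ?thesis by simp
qed

lemma C_k_on_isCont:
  assumes sm: "C_k_on K f S" and m: "m < K" and t: "t \<in> S"
  shows "isCont ((deriv ^^ m) f) t"
proof -
  have "(deriv ^^ m) f differentiable (at t)" using sm m t unfolding C_k_on_def by blast
  then show ?thesis by (rule differentiable_imp_continuous_within)
qed

lemma taylor_peano_remainder:
  fixes f :: "real \<Rightarrow> real"
  assumes b: "b > 0" and sm: "C_k_on K f {-b<..<b}" and N: "N < K"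
  shows "((\<lambda>t. (f t - (\<Sum>m\<le>N. tcoef f m * t ^ m)) / t ^ N) \<longlongrightarrow> 0) (at 0)"
proof -
  let ?D = "\<lambda>m. (deriv ^^ m) f"
  have der: "\<And>m t. m < K \<Longrightarrow> \<bar>t\<bar> < b \<Longrightarrow> (?D m has_real_derivative ?D (Suc m) t) (at t)"
    by (rule C_k_on_has_real_derivative[OF sm]) auto
  have cont: "isCont (?D N) 0" by (rule C_k_on_isCont[OF sm N]) (use b in auto)
  then have lim: "(?D N \<midarrow>0\<rightarrow> ?D N 0)" by (simp add: isCont_def)
  show ?thesis unfolding LIM_eq
  proof (intro allI impI)
    fix r :: real assume r: "r > 0"
    then have "r * fact N > 0" by simp
    with lim obtain s where s: "s > 0"
      and hs: "\<And>x. x \<noteq> 0 \<and> norm (x - 0) < s \<Longrightarrow> norm (?D N x - ?D N 0) < r * fact N"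
      unfolding LIM_eq by blast
    show "\<exists>s>0. \<forall>x. x \<noteq> 0 \<and> norm (x - 0) < s \<longrightarrow>
          norm ((f x - (\<Sum>m\<le>N. tcoef f m * x ^ m)) / x ^ N - 0) < r"
    proof (intro exI[of _ "min s b"] conjI allI impI)
      show "min s b > 0" using s b by simp
      fix x :: real assume x: "x \<noteq> 0 \<and> norm (x - 0) < min s b"
      have "\<forall>m t. m < N \<and> \<bar>t\<bar> \<le> \<bar>x\<bar> \<longrightarrow> (?D m has_real_derivative ?D (Suc m) t) (at t)"
        using der N x by auto
      from Maclaurin_bi_le[of ?D f N, OF _ this] obtain \<xi> where
        xi: "\<bar>\<xi>\<bar> \<le> \<bar>x\<bar>" and
        fx: "f x = (\<Sum>m<N. ?D m 0 / fact m * x ^ m) + ?D N \<xi> / fact N * x ^ N"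
        by auto
      have sumN: "(\<Sum>m\<le>N. tcoef f m * x ^ m) = (\<Sum>m<N. ?D m 0 / fact m * x ^ m) + ?D N 0 / fact N * x ^ N"
        by (simp add: lessThan_Suc_atMost[symmetric] tcoef_def)
      have xN: "x ^ N \<noteq> 0" using x by simp
      have eq: "(f x - (\<Sum>m\<le>N. tcoef f m * x ^ m)) / x ^ N = (?D N \<xi> - ?D N 0) / fact N"
        unfolding fx sumN using xN by (simp add: field_simps)
      have "norm (?D N \<xi> - ?D N 0) < r * fact N"
      proof (cases "\<xi> = 0")
        case True then show ?thesis using \<open>r * fact N > 0\<close> by simp
      next
        case False then show ?thesis using hs[of \<xi>] xi x by auto
      qed
      then show "norm ((f x - (\<Sum>m\<le>N. tcoef f m * x ^ m)) / x ^ N - 0) < r"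
        unfolding eq by (simp add: pos_divide_less_eq)
    qed
  qed
qed

lemma taylor_peano_remainder_scaled:
  fixes f :: "real \<Rightarrow> real"
  assumes b: "b > 0" and sm: "C_k_on K f {-b<..<b}" and N: "N < K" and d: "d \<ge> 0"
  shows "((\<lambda>e. (f (e * d) - (\<Sum>m\<le>N. tcoef f m * e ^ m * d ^ m)) / e ^ N) \<longlongrightarrow> 0) (at_right 0)"
proof (cases "d = 0")
  case True
  have "\<And>e. (\<Sum>m\<le>N. tcoef f m * e ^ m * 0 ^ m) = f 0"
    by (simp add: tcoef_def power_0_left sum.atMost_shift)
  then show ?thesis using True by simp
next
  case False
  then have dp: "d > 0" using d by simp
  let ?h = "\<lambda>t. (f t - (\<Sum>m\<le>N. tcoef f m * t ^ m)) / t ^ N"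
  have lim: "(?h \<longlongrightarrow> 0) (at 0)" by (rule taylor_peano_remainder[OF b sm N])
  have lin: "filterlim (\<lambda>e. e * d) (at 0) (at_right 0)"
  proof -
    have "((\<lambda>e. e * d) \<longlongrightarrow> 0 * d) (at_right (0::real))" by (intro tendsto_intros)
    moreover have "eventually (\<lambda>e. e * d \<noteq> 0) (at_right (0::real))"
      using eventually_at_right_less[of "0::real"] by (rule eventually_mono) (use dp in auto)
    ultimately show ?thesis by (simp add: filterlim_at tendsto_eventually)
  qed
  have "((\<lambda>e. ?h (e * d)) \<longlongrightarrow> 0) (at_right 0)"
    by (rule filterlim_compose[OF lim lin])
  then have "((\<lambda>e. d ^ N * ?h (e * d)) \<longlongrightarrow> d ^ N * 0) (at_right 0)"
    by (intro tendsto_intros)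
  moreover have "eventually (\<lambda>e. d ^ N * ?h (e * d) =
      (f (e * d) - (\<Sum>m\<le>N. tcoef f m * e ^ m * d ^ m)) / e ^ N) (at_right (0::real))"
    using eventually_at_right_less[of "0::real"]
  proof (rule eventually_mono)
    fix e :: real assume e: "0 < e"
    show "d ^ N * ?h (e * d) = (f (e * d) - (\<Sum>m\<le>N. tcoef f m * e ^ m * d ^ m)) / e ^ N"
      using e dp by (simp add: power_mult_distrib field_simps)
  qed
  ultimately show ?thesis by (simp add: tendsto_cong)
qed

lemma mat_cong:
  assumes "\<And>i j. i < s \<Longrightarrow> j < t \<Longrightarrow> F i j = G i j"
  shows "Matrix.mat s t (\<lambda>(i,j). F i j) = Matrix.mat s t (\<lambda>(i,j). G i j)"
  by (rule eq_matI) (use assms in auto)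

lemma det_diagonal:
  "det (Matrix.mat s s (\<lambda>(i,j). if i = j then d i else (0::'a::comm_ring_1))) = (\<Prod>i<s. d i)"
proof -
  have "det (Matrix.mat s s (\<lambda>(i,j). if i = j then d i else (0::'a))) =
        prod_list (diag_mat (Matrix.mat s s (\<lambda>(i,j). if i = j then d i else (0::'a))))"
    by (rule det_upper_triangular) (auto simp: upper_triangular_def)
  also have "\<dots> = (\<Prod>i<s. d i)" unfolding prod_list_diag_prod by (simp add: atLeast0LessThan)
  finally show ?thesis .
qed

lemma mat_sum_diag_eq_mult:
  fixes M :: "nat \<Rightarrow> nat \<Rightarrow> 'a::comm_ring_1"
  shows "Matrix.mat s s (\<lambda>(a,b). \<Sum>t<s. M a t * d t * M b t) =
    Matrix.mat s s (\<lambda>(a,t). M a t) * Matrix.mat s s (\<lambda>(i,j). if i = j then d i else 0)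
      * transpose_mat (Matrix.mat s s (\<lambda>(a,t). M a t))"
  by (rule eq_matI)
    (auto simp: scalar_prod_def atLeast0LessThan if_distrib sum.delta cong: if_cong intro!: sum.cong)

lemma det_mult_diag_transpose:
  fixes M :: "nat \<Rightarrow> nat \<Rightarrow> 'a::comm_ring_1"
  shows "det (Matrix.mat s s (\<lambda>(a,b). \<Sum>t<s. M a t * d t * M b t)) =
         det (Matrix.mat s s (\<lambda>(a,t). M a t)) ^ 2 * (\<Prod>t<s. d t)"
proof -
  let ?M = "Matrix.mat s s (\<lambda>(a,t). M a t)"
  let ?D = "Matrix.mat s s (\<lambda>(i,j). if i = j then d i else (0::'a))"
  have c: "?M \<in> carrier_mat s s" "?D \<in> carrier_mat s s" "transpose_mat ?M \<in> carrier_mat s s" by auto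
  have "det (?M * ?D * transpose_mat ?M) = det ?M * det ?D * det (transpose_mat ?M)"
    using det_mult[OF mult_carrier_mat[OF c(1) c(2)] c(3)] det_mult[OF c(1) c(2)] by simp
  then show ?thesis
    by (simp add: mat_sum_diag_eq_mult det_transpose[OF c(1)] det_diagonal power2_eq_square)
qed

lemma det_scale_rows_cols:
  fixes M :: "nat \<Rightarrow> nat \<Rightarrow> 'a::comm_ring_1"
  shows "det (Matrix.mat s s (\<lambda>(a,t). c a * M a t * e t)) =
         (\<Prod>a<s. c a) * (\<Prod>t<s. e t) * det (Matrix.mat s s (\<lambda>(a,t). M a t))"
proof -
  let ?M = "Matrix.mat s s (\<lambda>(a,t). M a t)"
  let ?C = "Matrix.mat s s (\<lambda>(i,j). if i = j then c i else (0::'a))"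
  let ?E = "Matrix.mat s s (\<lambda>(i,j). if i = j then e i else (0::'a))"
  have eq: "Matrix.mat s s (\<lambda>(a,t). c a * M a t * e t) = ?C * ?M * ?E"
    by (rule eq_matI)
      (auto simp: scalar_prod_def atLeast0LessThan if_distrib if_distribR sum.delta sum.delta' cong: if_cong)
  have c: "?M \<in> carrier_mat s s" "?C \<in> carrier_mat s s" "?E \<in> carrier_mat s s" by auto
  have "det (?C * ?M * ?E) = det ?C * det ?M * det ?E"
    using det_mult[OF mult_carrier_mat[OF c(2) c(1)] c(3)] det_mult[OF c(2) c(1)] by simp
  then show ?thesis using eq by (simp add: det_diagonal)
qed

lemma tendsto_det:
  fixes F :: "'b \<Rightarrow> nat \<Rightarrow> nat \<Rightarrow> real"
  assumes "\<And>i j. i < s \<Longrightarrow> j < s \<Longrightarrow> ((\<lambda>e. F e i j) \<longlongrightarrow> L i j) G"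
  shows "((\<lambda>e. det (Matrix.mat s s (\<lambda>(i,j). F e i j))) \<longlongrightarrow> det (Matrix.mat s s (\<lambda>(i,j). L i j))) G"
proof -
  have perm: "p i < s" if "p permutes {0..<s}" "i < s" for p i
    using that permutes_in_image by fastforce
  have d: "det (Matrix.mat s s (\<lambda>(i,j). H i j)) =
      (\<Sum>p\<in>{p. p permutes {0..<s}}. signof p * (\<Prod>i = 0..<s. H i (p i)))" for H :: "nat \<Rightarrow> nat \<Rightarrow> real"
    by (subst det_def') (auto simp: perm intro!: sum.cong prod.cong)
  show ?thesis unfolding d
    by (intro tendsto_sum tendsto_mult tendsto_const tendsto_prod) (auto simp: perm assms)
qed

lemma char_poly_orthogonal_diag:
  fixes G :: "real mat"
  assumes G: "G \<in> carrier_mat m m" and GtG: "transpose_mat G * G = 1\<^sub>m m"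
    and M: "M = G * Matrix.mat m m (\<lambda>(i,j). if i = j then d i else 0) * transpose_mat G"
  shows "char_poly M = (\<Prod>k<m. [:- d k, 1:])"
proof -
  let ?D = "Matrix.mat m m (\<lambda>(i,j). if i = j then d i else 0)"
  have Gt: "transpose_mat G \<in> carrier_mat m m" using G by simp
  have GGt: "G * transpose_mat G = 1\<^sub>m m" by (rule mat_mult_left_right_inverse[OF Gt G GtG])
  have Mc: "M \<in> carrier_mat m m" unfolding M using G Gt by (intro mult_carrier_mat) auto
  have "similar_mat M ?D"
    unfolding similar_mat_def
    by (rule exI, rule exI, rule similar_mat_witI[OF GGt GtG M Mc _ G Gt]) simp
  then have "char_poly M = char_poly ?D" by (rule char_poly_similar)
  also have "\<dots> = prod_list (map (\<lambda>a. [:- a, 1:]) (diag_mat ?D))"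
    by (rule char_poly_upper_triangular) (auto simp: upper_triangular_def)
  also have "\<dots> = (\<Prod>k<m. [:- d k, 1:])"
    by (simp add: diag_mat_def prod.distinct_set_conv_list[symmetric] atLeast0LessThan)
  finally show ?thesis .
qed

lemma sum_eq_single:
  assumes "finite A" "a \<in> A" "\<And>c. c \<in> A \<Longrightarrow> c \<noteq> a \<Longrightarrow> F c = (0::'a::comm_monoid_add)"
  shows "sum F A = F a"
  using sum.mono_neutral_left[of A "{a}" F] assms by auto

lemma sum_lessThan_split:
  fixes s n :: nat
  assumes "s \<le> n"
  shows "(\<Sum>t<n. F t) = (\<Sum>t<s. F t) + (\<Sum>t\<in>{s..<n}. (F t :: 'a::comm_monoid_add))"
proof -
  have "(\<Sum>t\<in>{0..<s}. F t) + (\<Sum>t\<in>{s..<n}. F t) = (\<Sum>t\<in>{0..<n}. F t)"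
    using assms by (intro sum.atLeastLessThan_concat) auto
  then show ?thesis by (simp add: atLeast0LessThan)
qed

lemma sum_atLeastLessThan_shift:
  fixes r n :: nat
  assumes "r \<le> n"
  shows "(\<Sum>k\<in>{r..<n}. F k) = (\<Sum>j<n - r. (F (r + j) :: 'a::comm_monoid_add))"
proof -
  have "(\<Sum>k\<in>{0 + r..<(n - r) + r}. F k) = (\<Sum>j\<in>{0..<n - r}. F (j + r))"
    by (rule sum.shift_bounds_nat_ivl)
  then show ?thesis using assms by (simp add: atLeast0LessThan add.commute)
qed

text \<open>Vectors of \<open>\<real>\<^sup>n\<close> are handled as functions \<open>nat \<Rightarrow> real\<close> of which only the values
  below \<open>n\<close> matter.\<close>

definition dotn :: "nat \<Rightarrow> (nat \<Rightarrow> real) \<Rightarrow> (nat \<Rightarrow> real) \<Rightarrow> real" where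
  "dotn n u w = (\<Sum>i<n. u i * w i)"

lemma dotn_vec_index:
  assumes "w \<in> carrier_vec n"
  shows "dotn n (\<lambda>i. v $ i) (\<lambda>i. w $ i) = v \<bullet> w"
  using assms by (simp add: dotn_def scalar_prod_def atLeast0LessThan)

lemma dotn_comm: "dotn n u v = dotn n v u"
  unfolding dotn_def by (simp add: mult.commute)

lemma dotn_scale_right: "dotn n u (\<lambda>i. a * v i) = a * dotn n u v"
  unfolding dotn_def by (simp add: sum_distrib_left ac_simps)

lemma dotn_scale_left: "dotn n (\<lambda>i. a * v i) u = a * dotn n v u"
  unfolding dotn_def by (simp add: sum_distrib_left ac_simps)

lemma dotn_add_right: "dotn n u (\<lambda>i. v i + w i) = dotn n u v + dotn n u w"
  unfolding dotn_def by (simp add: sum.distrib distrib_left)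

lemma dotn_diff_right: "dotn n u (\<lambda>i. v i - w i) = dotn n u v - dotn n u w"
  unfolding dotn_def by (simp add: sum_subtractf right_diff_distrib)

lemma dotn_diff_left: "dotn n (\<lambda>i. v i - w i) u = dotn n v u - dotn n w u"
  unfolding dotn_def by (simp add: sum_subtractf left_diff_distrib)

lemma dotn_sum_right: "dotn n u (\<lambda>i. \<Sum>j\<in>J. c j * v j i) = (\<Sum>j\<in>J. c j * dotn n u (v j))"
proof -
  have "dotn n u (\<lambda>i. \<Sum>j\<in>J. c j * v j i) = (\<Sum>i<n. \<Sum>j\<in>J. c j * (u i * v j i))"
    unfolding dotn_def by (simp add: sum_distrib_left ac_simps)
  also have "\<dots> = (\<Sum>j\<in>J. \<Sum>i<n. c j * (u i * v j i))" by (rule sum.swap)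
  also have "\<dots> = (\<Sum>j\<in>J. c j * dotn n u (v j))" unfolding dotn_def by (simp add: sum_distrib_left)
  finally show ?thesis .
qed

lemma dotn_sum_left: "dotn n (\<lambda>i. \<Sum>j\<in>J. c j * v j i) u = (\<Sum>j\<in>J. c j * dotn n (v j) u)"
  using dotn_sum_right[of n u c v J] by (simp add: dotn_comm)

lemma dotn_self_nonneg: "dotn n u u \<ge> 0"
  unfolding dotn_def by (rule sum_nonneg) simp

lemma dotn_self_eq_0:
  assumes "dotn n u u = 0" "i < n"
  shows "u i = 0"
proof -
  have "\<forall>j\<in>{..<n}. u j * u j = 0"
    using assms(1) unfolding dotn_def by (subst sum_nonneg_eq_0_iff[symmetric]) auto
  then show ?thesis using assms(2) by simp
qed

lemma dotn_zero_left: "(\<And>i. i < n \<Longrightarrow> u i = 0) \<Longrightarrow> dotn n u v = 0"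
  unfolding dotn_def by simp

lemma dotn_cong:
  "(\<And>i. i < n \<Longrightarrow> u i = u' i) \<Longrightarrow> (\<And>i. i < n \<Longrightarrow> v i = v' i) \<Longrightarrow> dotn n u v = dotn n u' v'"
  unfolding dotn_def by simp

lemma outer_mult_zero_imp_orthogonal:
  fixes a b :: "real Matrix.vec"
  assumes a: "a \<in> carrier_vec n" and b: "b \<in> carrier_vec n"
    and aa: "a \<bullet> a = 1" and bb: "b \<bullet> b = 1"
    and z: "outer n a * outer n b = 0\<^sub>m n n"
  shows "dotn n (\<lambda>i. a $ i) (\<lambda>i. b $ i) = 0"
proof -
  let ?d = "dotn n (\<lambda>i. a $ i) (\<lambda>i. b $ i)"
  have "(outer n a * outer n b) *\<^sub>v b = (?d * (b \<bullet> b)) \<cdot>\<^sub>v a"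
    using a b by (auto simp: outer_def scalar_prod_def dotn_def atLeast0LessThan
        sum_distrib_left sum_distrib_right ac_simps intro!: eq_vecI sum.cong)
  moreover have "(outer n a * outer n b) *\<^sub>v b = 0\<^sub>v n"
    using z b by (intro eq_vecI) auto
  ultimately have "?d \<cdot>\<^sub>v a = 0\<^sub>v n" using bb by simp
  then have "?d * (a \<bullet> a) = 0"
    by (metis a scalar_prod_left_zero smult_scalar_prod_distrib)
  then show ?thesis using aa by simp
qed

definition orthonormal_basis :: "nat \<Rightarrow> (nat \<Rightarrow> nat \<Rightarrow> real) \<Rightarrow> bool" where
  "orthonormal_basis n e \<longleftrightarrow> (\<forall>a<n. \<forall>b<n. dotn n (e a) (e b) = (if a = b then 1 else 0))"

lemma orthonormal_basis_complete:
  assumes orth: "orthonormal_basis n e" and i: "i < n" and j: "j < n"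
  shows "(\<Sum>t<n. e t i * e t j) = (if i = j then 1 else 0)"
proof -
  let ?E = "Matrix.mat n n (\<lambda>(i,t). e t i)"
  have c: "?E \<in> carrier_mat n n" "transpose_mat ?E \<in> carrier_mat n n" by auto
  have "transpose_mat ?E * ?E = 1\<^sub>m n"
    using orth by (auto simp: orthonormal_basis_def scalar_prod_def dotn_def atLeast0LessThan)
  then have "?E * transpose_mat ?E = 1\<^sub>m n" by (rule mat_mult_left_right_inverse[OF c(2) c(1)])
  then have "(?E * transpose_mat ?E) $$ (i,j) = (1\<^sub>m n :: real mat) $$ (i,j)" by simp
  then show ?thesis using i j by (simp add: scalar_prod_def atLeast0LessThan)
qed

lemma orthonormal_basis_expand:
  assumes orth: "orthonormal_basis n e" and i: "i < n"
  shows "v i = (\<Sum>t<n. dotn n (e t) v * e t i)"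
proof -
  have "(\<Sum>t<n. dotn n (e t) v * e t i) = (\<Sum>t<n. \<Sum>j<n. e t i * e t j * v j)"
    unfolding dotn_def sum_distrib_right by (intro sum.cong refl) (simp add: ac_simps)
  also have "\<dots> = (\<Sum>j<n. \<Sum>t<n. e t i * e t j * v j)" by (rule sum.swap)
  also have "\<dots> = (\<Sum>j<n. (if i = j then v j else 0))"
    by (intro sum.cong refl) (simp add: sum_distrib_right[symmetric] orthonormal_basis_complete[OF orth i])
  also have "\<dots> = v i" using i by simp
  finally show ?thesis by simp
qed

lemma mult_mat_vec_index_sum:
  assumes "M \<in> carrier_mat nr nc" "v \<in> carrier_vec nc" "i < nr"
  shows "(M *\<^sub>v v) $ i = (\<Sum>k<nc. M $$ (i,k) * v $ k)"
  using assms by (simp add: scalar_prod_def atLeast0LessThan)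

lemma col_space_subset_orthonormal_tail:
  assumes rn: "r \<le> n" and A: "A \<in> carrier_mat n (n - r)" and B: "B \<in> carrier_mat n (n - r)"
    and Ai: "\<And>i m. i < n \<Longrightarrow> m < n - r \<Longrightarrow> A $$ (i,m) = a (r + m) i"
    and Bi: "\<And>i m. i < n \<Longrightarrow> m < n - r \<Longrightarrow> B $$ (i,m) = b (r + m) i"
    and orth: "orthonormal_basis n b"
    and perp: "\<And>k t. k < r \<Longrightarrow> r \<le> t \<Longrightarrow> t < n \<Longrightarrow> dotn n (b k) (a t) = 0"
  shows "col_space A \<subseteq> col_space B"
proof
  fix v assume "v \<in> col_space A"
  then obtain ya where ya: "ya \<in> carrier_vec (n - r)" and v: "v = A *\<^sub>v ya"
    unfolding col_space_def using A by auto
  define g where "g i = (\<Sum>m<n - r. ya $ m * a (r + m) i)" for i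
  have vg: "v $ i = g i" if "i < n" for i
    unfolding v g_def using mult_mat_vec_index_sum[OF A ya that] Ai that by (simp add: mult.commute)
  define yb where "yb = Matrix.vec (n - r) (\<lambda>j. dotn n (b (r + j)) g)"
  have yb: "yb \<in> carrier_vec (n - r)" unfolding yb_def by simp
  have head: "dotn n (b k) g = 0" if "k < r" for k
  proof -
    have "dotn n (b k) g = (\<Sum>m<n - r. ya $ m * dotn n (b k) (a (r + m)))"
      unfolding g_def[abs_def] by (rule dotn_sum_right)
    also have "\<dots> = 0" using perp[OF that] by (intro sum.neutral) auto
    finally show ?thesis .
  qed
  have "B *\<^sub>v yb = v"
  proof (rule eq_vecI)
    show "dim_vec (B *\<^sub>v yb) = dim_vec v" using B A v by simp
    fix i assume "i < dim_vec v"
    then have i: "i < n" using v A by simp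
    have "(B *\<^sub>v yb) $ i = (\<Sum>j<n - r. dotn n (b (r + j)) g * b (r + j) i)"
      using mult_mat_vec_index_sum[OF B yb i] Bi i by (simp add: yb_def mult.commute)
    also have "\<dots> = (\<Sum>k<n. dotn n (b k) g * b k i)"
    proof -
      let ?F = "\<lambda>k. dotn n (b k) g * b k i"
      have "(\<Sum>k<r. ?F k) = 0" using head by simp
      then show ?thesis
        using sum_lessThan_split[OF rn, of ?F] sum_atLeastLessThan_shift[OF rn, of ?F] by simp
    qed
    also have "\<dots> = v $ i" using orthonormal_basis_expand[OF orth i] vg[OF i] by simp
    finally show "(B *\<^sub>v yb) $ i = v $ i" .
  qed
  then show "v \<in> col_space B" unfolding col_space_def using yb B by auto
qed

lemma sum_sum_diff_power_binomial:
  fixes x u w :: "nat \<Rightarrow> real"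
  shows "(\<Sum>i<n. \<Sum>j<n. u i * w j * (x i - x j) ^ m) =
    (\<Sum>a\<le>m. real (m choose a) * (-1) ^ (m - a) * dotn n u (\<lambda>i. x i ^ a) * dotn n w (\<lambda>i. x i ^ (m - a)))"
proof -
  let ?c = "\<lambda>a. real (m choose a) * (-1) ^ (m - a)"
  have "u i * w j * (x i - x j) ^ m = (\<Sum>a\<le>m. ?c a * ((u i * x i ^ a) * (w j * x j ^ (m - a))))" for i j
  proof -
    have "(x i - x j) ^ m = (\<Sum>a\<le>m. real (m choose a) * x i ^ a * (- x j) ^ (m - a))"
      using binomial_ring[of "x i" "- x j" m] by simp
    then show ?thesis
      by (simp only: sum_distrib_left power_minus[of "x j"] mult_ac)
  qed
  then have "(\<Sum>i<n. \<Sum>j<n. u i * w j * (x i - x j) ^ m) =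
      (\<Sum>i<n. \<Sum>j<n. \<Sum>a\<le>m. ?c a * ((u i * x i ^ a) * (w j * x j ^ (m - a))))"
    by simp
  also have "\<dots> = (\<Sum>i<n. \<Sum>a\<le>m. \<Sum>j<n. ?c a * ((u i * x i ^ a) * (w j * x j ^ (m - a))))"
    by (rule sum.cong[OF refl], rule sum.swap)
  also have "\<dots> = (\<Sum>a\<le>m. \<Sum>i<n. \<Sum>j<n. ?c a * ((u i * x i ^ a) * (w j * x j ^ (m - a))))"
    by (rule sum.swap)
  also have "\<dots> = (\<Sum>a\<le>m. ?c a * ((\<Sum>i<n. u i * x i ^ a) * (\<Sum>j<n. w j * x j ^ (m - a))))"
    by (intro sum.cong refl) (simp only: sum_product, simp only: sum_distrib_left)
  finally show ?thesis by (simp only: dotn_def mult.assoc)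
qed

lemma orthonormal_basis_parseval:
  assumes orth: "orthonormal_basis n e"
  shows "dotn n u v = (\<Sum>a<n. dotn n (e a) u * dotn n (e a) v)"
proof -
  have "dotn n u v = dotn n u (\<lambda>i. \<Sum>a<n. dotn n (e a) v * e a i)"
    by (rule dotn_cong) (use orthonormal_basis_expand[OF orth] in auto)
  also have "\<dots> = (\<Sum>a<n. dotn n (e a) v * dotn n u (e a))"
    by (rule dotn_sum_right)
  finally show ?thesis by (simp add: dotn_comm mult.commute)
qed

section \<open>Gram--Schmidt orthogonalisation of the monomials\<close>

text \<open>\<open>y 0, \<dots>, y (s - 1)\<close> is obtained from \<open>1, x, \<dots>, x\<^sup>s\<^sup>-\<^sup>1\<close> by Gram--Schmidt; a step in which
  the next monomial already lies in the span of the previous ones produces the zero vector.\<close>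

definition orthonormal_or_zero :: "nat \<Rightarrow> nat \<Rightarrow> (nat \<Rightarrow> nat \<Rightarrow> real) \<Rightarrow> bool" where
  "orthonormal_or_zero n s y \<longleftrightarrow> (\<forall>a<s. \<forall>b<s. a \<noteq> b \<longrightarrow> dotn n (y a) (y b) = 0) \<and>
      (\<forall>a<s. dotn n (y a) (y a) = 0 \<or> dotn n (y a) (y a) = 1)"

definition spans_monomials :: "nat \<Rightarrow> (nat \<Rightarrow> real) \<Rightarrow> nat \<Rightarrow> (nat \<Rightarrow> nat \<Rightarrow> real) \<Rightarrow> bool" where
  "spans_monomials n x s y \<longleftrightarrow> (\<forall>c<s. \<forall>i<n. x i ^ c = (\<Sum>j\<le>c. dotn n (y j) (\<lambda>i. x i ^ c) * y j i))"

definition gs_nondegenerate :: "nat \<Rightarrow> (nat \<Rightarrow> real) \<Rightarrow> nat \<Rightarrow> (nat \<Rightarrow> nat \<Rightarrow> real) \<Rightarrow> bool" where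
  "gs_nondegenerate n x s y \<longleftrightarrow> (\<forall>a<s. dotn n (y a) (y a) = 1 \<longrightarrow> dotn n (y a) (\<lambda>i. x i ^ a) \<noteq> 0)"

lemma orthonormal_or_zero_mono: "orthonormal_or_zero n s y \<Longrightarrow> s' \<le> s \<Longrightarrow> orthonormal_or_zero n s' y"
  unfolding orthonormal_or_zero_def by auto

lemma spans_monomials_mono: "spans_monomials n x s y \<Longrightarrow> s' \<le> s \<Longrightarrow> spans_monomials n x s' y"
  unfolding spans_monomials_def by auto

lemma orthonormal_or_zero_proj:
  assumes "orthonormal_or_zero n s y" "a < s"
  shows "dotn n (y a) v = dotn n (y a) v * dotn n (y a) (y a)"
proof (cases "dotn n (y a) (y a) = 1")
  case False
  then have "dotn n (y a) (y a) = 0" using assms unfolding orthonormal_or_zero_def by auto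
  then have "dotn n (y a) v = 0" by (intro dotn_zero_left) (use dotn_self_eq_0 in auto)
  then show ?thesis by simp
qed simp

lemma orthonormal_or_zero_extend:
  assumes "orthonormal_or_zero n s y" "\<And>a. a < s \<Longrightarrow> dotn n (y a) z = 0"
    and "dotn n z z = 0 \<or> dotn n z z = 1"
  shows "orthonormal_or_zero n (Suc s) (y(s := z))"
  using assms unfolding orthonormal_or_zero_def by (auto simp: less_Suc_eq dotn_comm)

lemma gs_residual:
  fixes n s :: nat and y :: "nat \<Rightarrow> nat \<Rightarrow> real" and v :: "nat \<Rightarrow> real"
  assumes on: "orthonormal_or_zero n s y"
  defines "w \<equiv> \<lambda>i. v i - (\<Sum>j<s. dotn n (y j) v * y j i)"
  shows gs_residual_orthogonal: "\<And>a. a < s \<Longrightarrow> dotn n (y a) w = 0"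
    and gs_residual_inner: "dotn n w v = dotn n w w"
proof -
  show orth: "dotn n (y a) w = 0" if a: "a < s" for a
  proof -
    have "(\<Sum>j<s. dotn n (y j) v * dotn n (y a) (y j)) = dotn n (y a) v * dotn n (y a) (y a)"
      by (rule sum_eq_single) (use on a in \<open>auto simp: orthonormal_or_zero_def\<close>)
    then show ?thesis
      using orthonormal_or_zero_proj[OF on a, of v] w_def by (simp add: dotn_diff_right dotn_sum_right)
  qed
  have "dotn n w v = dotn n w (\<lambda>i. w i + (\<Sum>j<s. dotn n (y j) v * y j i))"
    by (rule dotn_cong) (auto simp: w_def)
  also have "\<dots> = dotn n w w" using orth by (simp add: dotn_add_right dotn_sum_right dotn_comm)
  finally show "dotn n w v = dotn n w w" .
qed

lemma dotn_normalized:
  fixes n :: nat and w :: "nat \<Rightarrow> real"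
  defines "z \<equiv> \<lambda>i. (1 / sqrt (dotn n w w)) * w i"
  shows dotn_normalized_self: "dotn n z z = (if dotn n w w = 0 then 0 else 1)"
    and dotn_normalized_right: "dotn n u w = 0 \<Longrightarrow> dotn n u z = 0"
    and dotn_normalized_left: "dotn n w v = dotn n w w \<Longrightarrow> dotn n z v = sqrt (dotn n w w)"
    and dotn_normalized_expand: "dotn n w v = dotn n w w \<Longrightarrow> i < n \<Longrightarrow> dotn n z v * z i = w i"
proof -
  have nw: "dotn n w w \<ge> 0" by (rule dotn_self_nonneg)
  show "dotn n z z = (if dotn n w w = 0 then 0 else 1)"
    unfolding z_def dotn_scale_left dotn_scale_right using nw by (auto simp: field_simps)
  show "dotn n u w = 0 \<Longrightarrow> dotn n u z = 0"
    unfolding z_def dotn_scale_right by simp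
  show zv: "dotn n z v = sqrt (dotn n w w)" if "dotn n w v = dotn n w w"
    unfolding z_def dotn_scale_left that using nw by (simp add: real_div_sqrt)
  show "dotn n z v * z i = w i" if "dotn n w v = dotn n w w" "i < n"
  proof (cases "dotn n w w = 0")
    case True
    then show ?thesis using dotn_self_eq_0[OF True that(2)] unfolding z_def by simp
  next
    case False
    then show ?thesis unfolding zv[OF that(1)] unfolding z_def using nw by simp
  qed
qed

lemma gram_schmidt_step:
  assumes on: "orthonormal_or_zero n s y" and sp: "spans_monomials n x s y"
    and nz: "gs_nondegenerate n x s y"
  shows "\<exists>y'. orthonormal_or_zero n (Suc s) y' \<and> spans_monomials n x (Suc s) y' \<and>
    gs_nondegenerate n x (Suc s) y'"
proof -
  let ?v = "\<lambda>i. x i ^ s"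
  define w where "w = (\<lambda>i. ?v i - (\<Sum>j<s. dotn n (y j) ?v * y j i))"
  define z where "z = (\<lambda>i. (1 / sqrt (dotn n w w)) * w i)"
  have wv: "dotn n w ?v = dotn n w w"
    unfolding w_def by (rule gs_residual_inner[OF on])
  have "orthonormal_or_zero n (Suc s) (y(s := z))"
    using gs_residual_orthogonal[OF on] dotn_normalized_self[of n w]
    unfolding z_def w_def by (intro orthonormal_or_zero_extend[OF on] dotn_normalized_right) auto
  moreover have "spans_monomials n x (Suc s) (y(s := z))"
    unfolding spans_monomials_def
  proof (intro allI impI)
    fix c i assume c: "c < Suc s" and i: "i < n"
    show "x i ^ c = (\<Sum>j\<le>c. dotn n ((y(s := z)) j) (\<lambda>i. x i ^ c) * (y(s := z)) j i)"
    proof (cases "c = s")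
      case True
      then show ?thesis
        using dotn_normalized_expand[OF wv i] unfolding z_def w_def
        by (simp add: lessThan_Suc_atMost[symmetric])
    next
      case False
      then show ?thesis using sp c i by (auto simp: spans_monomials_def intro: sum.cong)
    qed
  qed
  moreover have "gs_nondegenerate n x (Suc s) (y(s := z))"
    using nz dotn_normalized_self[of n w] dotn_normalized_left[OF wv]
    unfolding z_def by (auto simp: gs_nondegenerate_def less_Suc_eq)
  ultimately show ?thesis by blast
qed

lemma gram_schmidt_monomials:
  "\<exists>y. orthonormal_or_zero n s y \<and> spans_monomials n x s y \<and> gs_nondegenerate n x s y"
proof (induction s)
  case 0
  then show ?case unfolding orthonormal_or_zero_def spans_monomials_def gs_nondegenerate_def by auto
next
  case (Suc s)
  then obtain y where "orthonormal_or_zero n s y" "spans_monomials n x s y" "gs_nondegenerate n x s y"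
    by blast
  then show ?case using gram_schmidt_step by blast
qed

lemma monomial_expand:
  assumes sp: "spans_monomials n x s y" and c: "c < s"
  shows "dotn n v (\<lambda>i. x i ^ c) = (\<Sum>j\<le>c. dotn n (y j) (\<lambda>i. x i ^ c) * dotn n v (y j))"
proof -
  have "dotn n v (\<lambda>i. x i ^ c) = dotn n v (\<lambda>i. \<Sum>j\<le>c. dotn n (y j) (\<lambda>i. x i ^ c) * y j i)"
    by (rule dotn_cong) (use sp c in \<open>auto simp: spans_monomials_def\<close>)
  then show ?thesis by (simp add: dotn_sum_right)
qed

lemma gs_orthogonal_lower:
  assumes on: "orthonormal_or_zero n s y" and sp: "spans_monomials n x s y" and a: "a < s"
    and c: "c < a"
  shows "dotn n (y a) (\<lambda>i. x i ^ c) = 0"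
proof -
  have "dotn n (y a) (\<lambda>i. x i ^ c) = (\<Sum>j\<le>c. dotn n (y j) (\<lambda>i. x i ^ c) * dotn n (y a) (y j))"
    using a c by (intro monomial_expand[OF sp]) simp
  also have "\<dots> = 0"
    using on a c by (intro sum.neutral) (auto simp: orthonormal_or_zero_def)
  finally show ?thesis .
qed

lemma vandermonde_gram_eq:
  assumes "1 \<le> s"
  shows "transpose_mat (Vand n x (s - 1)) * Vand n x (s - 1) =
    Matrix.mat s s (\<lambda>(c,d). dotn n (\<lambda>i. x i ^ c) (\<lambda>i. x i ^ d))"
  using assms by (intro eq_matI) (auto simp: Vand_def scalar_prod_def dotn_def atLeast0LessThan)

text \<open>The Gram matrix of the monomials factors as \<open>L L\<^sup>T\<close> with \<open>L\<close> triangular and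
  diagonal \<open>\<langle>y a, x\<^sup>a\<rangle>\<close>.\<close>

lemma det_vandermonde_gram:
  assumes on: "orthonormal_or_zero n s y" and sp: "spans_monomials n x s y" and s1: "1 \<le> s"
  shows "det (transpose_mat (Vand n x (s - 1)) * Vand n x (s - 1)) =
    (\<Prod>a<s. dotn n (y a) (\<lambda>i. x i ^ a)) ^ 2"
proof -
  let ?L = "\<lambda>j c. dotn n (y j) (\<lambda>i. x i ^ c)"
  have gram: "dotn n (\<lambda>i. x i ^ c) (\<lambda>i. x i ^ d) = (\<Sum>t<s. ?L t c * 1 * ?L t d)"
    if c: "c < s" and d: "d < s" for c d
  proof -
    have "dotn n (\<lambda>i. x i ^ d) (\<lambda>i. x i ^ c) = (\<Sum>j\<le>c. ?L j c * dotn n (\<lambda>i. x i ^ d) (y j))"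
      by (rule monomial_expand[OF sp c])
    also have "\<dots> = (\<Sum>j<s. ?L j c * dotn n (\<lambda>i. x i ^ d) (y j))"
      using c gs_orthogonal_lower[OF on sp] by (intro sum.mono_neutral_left) auto
    finally show ?thesis by (simp add: dotn_comm)
  qed
  have "det (Matrix.mat s s (\<lambda>(c,t). ?L t c)) = prod_list (diag_mat (Matrix.mat s s (\<lambda>(c,t). ?L t c)))"
    using gs_orthogonal_lower[OF on sp] by (intro det_lower_triangular[of s]) auto
  then have tri: "det (Matrix.mat s s (\<lambda>(c,t). ?L t c)) = (\<Prod>a<s. ?L a a)"
    unfolding prod_list_diag_prod by (simp add: atLeast0LessThan)
  have "det (transpose_mat (Vand n x (s - 1)) * Vand n x (s - 1)) =
    det (Matrix.mat s s (\<lambda>(c,d). \<Sum>t<s. ?L t c * 1 * ?L t d))"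
    unfolding vandermonde_gram_eq[OF s1] by (subst mat_cong[OF gram]) auto
  also have "\<dots> = det (Matrix.mat s s (\<lambda>(c,t). ?L t c)) ^ 2 * (\<Prod>t<s. 1)"
    by (rule det_mult_diag_transpose)
  finally show ?thesis by (simp add: tri)
qed

lemma det_vandermonde_gram_nonzero:
  assumes inj: "inj_on x {..<n}" and s1: "1 \<le> s" and sn: "s \<le> n"
  shows "det (transpose_mat (Vand n x (s - 1)) * Vand n x (s - 1)) \<noteq> 0"
proof
  let ?A = "Matrix.mat s s (\<lambda>(c,d). dotn n (\<lambda>i. x i ^ c) (\<lambda>i. x i ^ d))"
  assume "det (transpose_mat (Vand n x (s - 1)) * Vand n x (s - 1)) = 0"
  then have "det ?A = 0" unfolding vandermonde_gram_eq[OF s1] .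
  then obtain v where v: "v \<in> carrier_vec s" "v \<noteq> 0\<^sub>v s" "?A *\<^sub>v v = 0\<^sub>v s"
    using det_0_iff_vec_prod_zero_field[of ?A s] by auto
  define g where "g i = (\<Sum>c<s. v $ c * x i ^ c)" for i
  have "v \<bullet> (?A *\<^sub>v v) = dotn n g g"
  proof -
    have "v \<bullet> (?A *\<^sub>v v) = (\<Sum>c<s. v $ c * (\<Sum>d<s. dotn n (\<lambda>i. x i ^ c) (\<lambda>i. x i ^ d) * v $ d))"
      using v(1) by (simp add: scalar_prod_def atLeast0LessThan)
    also have "\<dots> = (\<Sum>c<s. v $ c * dotn n (\<lambda>i. x i ^ c) g)"
      unfolding g_def by (simp add: dotn_sum_right mult.commute)
    also have "\<dots> = dotn n g g"
      unfolding g_def[abs_def] by (simp add: dotn_sum_left dotn_comm)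
    finally show ?thesis .
  qed
  then have "dotn n g g = 0" using v(1) v(3) by simp
  then have gz: "g i = 0" if "i < n" for i using dotn_self_eq_0 that by blast
  text \<open>\<open>g\<close> is a polynomial of degree \<open>< s \<le> n\<close> vanishing at the \<open>n\<close> distinct points.\<close>
  define pp where "pp = (\<Sum>c<s. monom (v $ c) c)"
  have poly_pp: "poly pp z = (\<Sum>c<s. v $ c * z ^ c)" for z
    unfolding pp_def by (simp add: poly_sum poly_monom)
  have "pp = 0"
  proof (rule ccontr)
    assume ne: "pp \<noteq> 0"
    have deg: "degree pp \<le> s - 1"
      unfolding pp_def by (rule degree_sum_le) (auto intro: order.trans[OF degree_monom_le])
    have sub: "x ` {..<n} \<subseteq> {z. poly pp z = 0}" using gz unfolding poly_pp g_def by auto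
    have "n = card (x ` {..<n})" using inj by (simp add: card_image)
    also have "\<dots> \<le> card {z. poly pp z = 0}" by (rule card_mono[OF poly_roots_finite[OF ne] sub])
    also have "\<dots> \<le> degree pp" by (rule card_poly_roots_bound[OF ne])
    finally show False using deg s1 sn by linarith
  qed
  have "v $ c = coeff pp c" if "c < s" for c
    unfolding pp_def using that by (simp add: coeff_sum coeff_monom)
  then have "v $ c = 0" if "c < s" for c
    using that \<open>pp = 0\<close> by simp
  then have "v = 0\<^sub>v s" using v(1) by (intro eq_vecI) auto
  then show False using v(2) by simp
qed

lemma full_QR_props:
  assumes qr: "full_QR (Vand n x (s - 1)) Q" and s1: "1 \<le> s" and sn: "s \<le> n"
  shows "Q \<in> carrier_mat n n"
    and "orthonormal_basis n (\<lambda>k i. Q $$ (i,k))"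
    and "spans_monomials n x s (\<lambda>k i. Q $$ (i,k))"
proof -
  have ss: "s - 1 + 1 = s" using s1 by simp
  have dims: "dim_row (Vand n x (s - 1)) = n" "dim_col (Vand n x (s - 1)) = s"
    unfolding Vand_def using ss by auto
  obtain R where Q: "Q \<in> carrier_mat n n" and QQ: "transpose_mat Q * Q = 1\<^sub>m n"
    and R: "R \<in> carrier_mat s s" and ut: "upper_triangular R"
    and VQ: "Vand n x (s - 1) = Q * Matrix.mat n s (\<lambda>(i,j). if i < s then R $$ (i,j) else 0)"
    using qr unfolding full_QR_def Let_def dims by blast
  show "Q \<in> carrier_mat n n" by (rule Q)
  let ?q = "\<lambda>k i. Q $$ (i,k)"
  have orth: "dotn n (?q a) (?q b) = (if a = b then 1 else 0)" if "a < n" "b < n" for a b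
  proof -
    have "(transpose_mat Q * Q) $$ (a,b) = dotn n (?q a) (?q b)"
      using Q that by (simp add: scalar_prod_def dotn_def atLeast0LessThan)
    then show ?thesis using QQ that by simp
  qed
  then show "orthonormal_basis n ?q" unfolding orthonormal_basis_def by blast
  have xc: "x i ^ c = (\<Sum>k\<le>c. R $$ (k,c) * ?q k i)" if c: "c < s" and i: "i < n" for c i
  proof -
    have "x i ^ c = Vand n x (s - 1) $$ (i,c)" using c i ss by (simp add: Vand_def)
    also have "\<dots> = (\<Sum>k<n. Q $$ (i,k) * (if k < s then R $$ (k,c) else 0))"
      unfolding VQ using Q c i by (simp add: scalar_prod_def atLeast0LessThan)
    also have "\<dots> = (\<Sum>k<s. Q $$ (i,k) * R $$ (k,c))"
      using sn by (subst sum.mono_neutral_right[of "{..<n}" "{..<s}"]) auto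
    also have "\<dots> = (\<Sum>k\<le>c. Q $$ (i,k) * R $$ (k,c))"
      using c ut R unfolding upper_triangular_def by (intro sum.mono_neutral_right) auto
    finally show ?thesis by (simp add: mult.commute)
  qed
  have Rc: "R $$ (k,c) = dotn n (?q k) (\<lambda>i. x i ^ c)" if c: "c < s" and k: "k \<le> c" for k c
  proof -
    have kn: "k < n" using k c sn by simp
    have "dotn n (?q k) (\<lambda>i. x i ^ c) = (\<Sum>k'\<le>c. R $$ (k',c) * dotn n (?q k) (?q k'))"
      unfolding dotn_sum_right[symmetric] by (rule dotn_cong) (use xc c in auto)
    also have "\<dots> = R $$ (k,c)"
      using k c sn orth[OF kn] by (subst sum_eq_single[of _ k]) auto
    finally show ?thesis by simp
  qed
  show "spans_monomials n x s ?q"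
    unfolding spans_monomials_def using xc Rc by (auto intro: sum.cong)
qed

lemma full_QR_tail_orthogonal_monomials:
  assumes qr: "full_QR (Vand n x (s - 1)) Q" and s1: "1 \<le> s" and sn: "s \<le> n"
    and t: "s \<le> t" "t < n" and c: "c < s"
  shows "dotn n (\<lambda>i. Q $$ (i,t)) (\<lambda>i. x i ^ c) = 0"
proof -
  let ?q = "\<lambda>k i. Q $$ (i,k)"
  have "dotn n (?q t) (\<lambda>i. x i ^ c) = (\<Sum>k\<le>c. dotn n (?q k) (\<lambda>i. x i ^ c) * dotn n (?q t) (?q k))"
    by (rule monomial_expand[OF full_QR_props(3)[OF qr s1 sn] c])
  also have "\<dots> = 0"
    using full_QR_props(2)[OF qr s1 sn] c t unfolding orthonormal_basis_def
    by (intro sum.neutral) auto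
  finally show ?thesis .
qed

section \<open>The analytic eigen-expansion of the kernel matrix\<close>

text \<open>Eigenvalues and eigenvectors are indexed from \<open>0\<close>: \<open>lam k\<close>, \<open>p k\<close> and \<open>lt k\<close> are
  \<open>\<lambda>\<^sub>k\<^sub>+\<^sub>1(\<epsilon>)\<close>, \<open>p\<^sub>k\<^sub>+\<^sub>1\<close> and \<open>\<lambda>~\<^sub>k\<^sub>+\<^sub>1\<close> of the paper.\<close>

locale kernel_eigen_expansion =
  fixes f :: "real \<Rightarrow> real" and b :: real and r n :: nat and x :: "nat \<Rightarrow> real"
    and \<epsilon>0 \<delta> :: real
    and lam :: "nat \<Rightarrow> real \<Rightarrow> real" and P :: "nat \<Rightarrow> real \<Rightarrow> real mat"
    and p :: "nat \<Rightarrow> real Matrix.vec" and lt :: "nat \<Rightarrow> real"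
  assumes b_pos: "b > 0" and r_ge1: "r \<ge> 1"
    and f_smooth: "C_k_on (2*r) f {-b<..<b}"
    and f_odd0: "\<And>l. 1 \<le> l \<Longrightarrow> l < r \<Longrightarrow> (deriv ^^ (2*l - 1)) f 0 = 0"
    and r_le_n: "r \<le> n"
    and eps0_pos: "\<epsilon>0 > 0"
    and K_psd: "\<And>\<epsilon>. 0 \<le> \<epsilon> \<Longrightarrow> \<epsilon> \<le> \<epsilon>0 \<Longrightarrow> psd_mat n (Kmat f n x \<epsilon>)"
    and delta_pos: "\<delta> > 0"
    and P_analytic: "\<And>k. k < n \<Longrightarrow> mat_analytic_near0 n (P k)"
    and P_rank1: "\<And>\<epsilon> k. \<bar>\<epsilon>\<bar> < \<delta> \<Longrightarrow> k < n \<Longrightarrow>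
                    \<exists>v\<in>carrier_vec n. scalar_prod v v = 1 \<and> P k \<epsilon> = outer n v"
    and P_orth: "\<And>\<epsilon> k j. \<bar>\<epsilon>\<bar> < \<delta> \<Longrightarrow> k < n \<Longrightarrow> j < n \<Longrightarrow> k \<noteq> j \<Longrightarrow>
                    P k \<epsilon> * P j \<epsilon> = 0\<^sub>m n n"
    and K_decomp: "\<And>\<epsilon> i j. \<bar>\<epsilon>\<bar> < \<delta> \<Longrightarrow> i < n \<Longrightarrow> j < n \<Longrightarrow>
                    Kmat f n x \<epsilon> $$ (i,j) = (\<Sum>k<n. lam k \<epsilon> * P k \<epsilon> $$ (i,j))"
    and lam_sorted: "\<And>\<epsilon> k. 0 < \<epsilon> \<Longrightarrow> \<epsilon> < \<delta> \<Longrightarrow> Suc k < n \<Longrightarrow> lam (Suc k) \<epsilon> \<le> lam k \<epsilon>"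
    and p_unit: "\<And>k. k < n \<Longrightarrow> p k \<in> carrier_vec n \<and> scalar_prod (p k) (p k) = 1"
    and p_limit: "\<And>k. k < n \<Longrightarrow> P k 0 = outer n (p k)"
    and lam_asymp: "\<And>s. s < n \<Longrightarrow> \<exists>C \<eta>. \<eta> > 0 \<and> (\<forall>\<epsilon>. 0 < \<epsilon> \<and> \<epsilon> < \<eta> \<longrightarrow>
          \<bar>lam s \<epsilon> - \<epsilon> ^ eig_order r s * lt s\<bar>
            \<le> C * \<epsilon> ^ (eig_order r s + 1))"
begin

definition eigvector :: "nat \<Rightarrow> real \<Rightarrow> real Matrix.vec" where
  "eigvector k e = (SOME v. v \<in> carrier_vec n \<and> v \<bullet> v = 1 \<and> P k e = outer n v)"

definition eigvec :: "nat \<Rightarrow> real \<Rightarrow> nat \<Rightarrow> real" where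
  "eigvec k e = (\<lambda>i. eigvector k e $ i)"

definition limvec :: "nat \<Rightarrow> nat \<Rightarrow> real" where
  "limvec k = (\<lambda>i. p k $ i)"

abbreviation xpow :: "nat \<Rightarrow> nat \<Rightarrow> real" where
  "xpow c \<equiv> (\<lambda>i. x i ^ c)"

definition kform :: "real \<Rightarrow> (nat \<Rightarrow> real) \<Rightarrow> (nat \<Rightarrow> real) \<Rightarrow> real" where
  "kform e u w = (\<Sum>i<n. \<Sum>j<n. u i * w j * f (e * \<bar>x i - x j\<bar>))"

definition pform :: "nat \<Rightarrow> real \<Rightarrow> (nat \<Rightarrow> real) \<Rightarrow> (nat \<Rightarrow> real) \<Rightarrow> real" where
  "pform k e u w = (\<Sum>i<n. \<Sum>j<n. u i * w j * P k e $$ (i,j))"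

lemma eigvector_props:
  assumes "\<bar>e\<bar> < \<delta>" "k < n"
  shows "eigvector k e \<in> carrier_vec n" "eigvector k e \<bullet> eigvector k e = 1"
    "P k e = outer n (eigvector k e)"
proof -
  have "\<exists>v. v \<in> carrier_vec n \<and> v \<bullet> v = 1 \<and> P k e = outer n v" using P_rank1[OF assms] by blast
  then have "eigvector k e \<in> carrier_vec n \<and> eigvector k e \<bullet> eigvector k e = 1 \<and>
      P k e = outer n (eigvector k e)"
    unfolding eigvector_def by (rule someI_ex)
  then show "eigvector k e \<in> carrier_vec n" "eigvector k e \<bullet> eigvector k e = 1"
    "P k e = outer n (eigvector k e)" by auto
qed

lemma P_eigvec_entry:
  assumes "\<bar>e\<bar> < \<delta>" "k < n" "i < n" "j < n"
  shows "P k e $$ (i,j) = eigvec k e i * eigvec k e j"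
  using eigvector_props(3)[OF assms(1,2)] assms(3,4) by (simp add: outer_def eigvec_def)

lemma P0_limvec_entry:
  assumes "k < n" "i < n" "j < n"
  shows "P k 0 $$ (i,j) = limvec k i * limvec k j"
  using p_limit[OF assms(1)] assms(2,3) by (simp add: outer_def limvec_def)

lemma pform_eigvec:
  assumes "\<bar>e\<bar> < \<delta>" "k < n"
  shows "pform k e u w = dotn n u (eigvec k e) * dotn n w (eigvec k e)"
proof -
  have "pform k e u w = (\<Sum>i<n. \<Sum>j<n. (u i * eigvec k e i) * (w j * eigvec k e j))"
    unfolding pform_def by (intro sum.cong refl) (simp add: P_eigvec_entry[OF assms] ac_simps)
  also have "\<dots> = dotn n u (eigvec k e) * dotn n w (eigvec k e)"
    unfolding dotn_def sum_product ..
  finally show ?thesis .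
qed

lemma pform_0:
  assumes "k < n"
  shows "pform k 0 u w = dotn n u (limvec k) * dotn n w (limvec k)"
proof -
  have "pform k 0 u w = (\<Sum>i<n. \<Sum>j<n. (u i * limvec k i) * (w j * limvec k j))"
    unfolding pform_def by (intro sum.cong refl) (simp add: P0_limvec_entry[OF assms] ac_simps)
  also have "\<dots> = dotn n u (limvec k) * dotn n w (limvec k)"
    unfolding dotn_def sum_product ..
  finally show ?thesis .
qed

lemma eigvec_unit:
  assumes "\<bar>e\<bar> < \<delta>" "k < n"
  shows "dotn n (eigvec k e) (eigvec k e) = 1"
  unfolding eigvec_def dotn_vec_index[OF eigvector_props(1)[OF assms]] by (rule eigvector_props(2)[OF assms])

lemma eigvec_orth:
  assumes "\<bar>e\<bar> < \<delta>" "k < n" "j < n" "k \<noteq> j"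
  shows "dotn n (eigvec k e) (eigvec j e) = 0"
proof -
  have z: "outer n (eigvector k e) * outer n (eigvector j e) = 0\<^sub>m n n"
    using P_orth[OF assms] eigvector_props(3)[OF assms(1,2)] eigvector_props(3)[OF assms(1,3)] by simp
  show ?thesis unfolding eigvec_def
    by (rule outer_mult_zero_imp_orthogonal[OF eigvector_props(1)[OF assms(1,2)] eigvector_props(1)[OF assms(1,3)]
          eigvector_props(2)[OF assms(1,2)] eigvector_props(2)[OF assms(1,3)] z])
qed

lemma limvec_unit: assumes "k < n" shows "dotn n (limvec k) (limvec k) = 1"
proof -
  have c: "p k \<in> carrier_vec n" and u: "scalar_prod (p k) (p k) = 1" using p_unit[OF assms] by auto
  show ?thesis unfolding limvec_def dotn_vec_index[OF c] by (rule u)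
qed

lemma limvec_orth:
  assumes "k < n" "j < n" "k \<noteq> j"
  shows "dotn n (limvec k) (limvec j) = 0"
proof -
  have z: "outer n (p k) * outer n (p j) = 0\<^sub>m n n"
    using P_orth[of 0, OF _ assms] delta_pos p_limit[OF assms(1)] p_limit[OF assms(2)] by simp
  have c: "p k \<in> carrier_vec n" "scalar_prod (p k) (p k) = 1" using p_unit[OF assms(1)] by auto
  have d: "p j \<in> carrier_vec n" "scalar_prod (p j) (p j) = 1" using p_unit[OF assms(2)] by auto
  show ?thesis unfolding limvec_def
    by (rule outer_mult_zero_imp_orthogonal[OF c(1) d(1) c(2) d(2) z])
qed

lemma kform_eigen_expansion:
  assumes e: "\<bar>e\<bar> < \<delta>"
  shows "kform e u w = (\<Sum>k<n. lam k e * pform k e u w)"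
proof -
  have "kform e u w = (\<Sum>i<n. \<Sum>j<n. \<Sum>k<n. lam k e * (u i * w j * P k e $$ (i,j)))"
    unfolding kform_def using K_decomp[OF e]
    by (intro sum.cong refl) (simp add: Kmat_def sum_distrib_left algebra_simps)
  also have "\<dots> = (\<Sum>i<n. \<Sum>k<n. \<Sum>j<n. lam k e * (u i * w j * P k e $$ (i,j)))"
    by (rule sum.cong[OF refl], rule sum.swap)
  also have "\<dots> = (\<Sum>k<n. \<Sum>i<n. \<Sum>j<n. lam k e * (u i * w j * P k e $$ (i,j)))"
    by (rule sum.swap)
  also have "\<dots> = (\<Sum>k<n. lam k e * pform k e u w)"
    unfolding pform_def by (simp add: sum_distrib_left)
  finally show ?thesis .
qed

lemma eventually_small: "eventually (\<lambda>e. 0 < e \<and> e < \<delta> \<and> e \<le> \<epsilon>0) (at_right 0)"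
proof -
  have "eventually (\<lambda>e. e \<in> {0<..<min \<delta> \<epsilon>0}) (at_right (0::real))"
    by (rule eventually_at_right_real) (use delta_pos eps0_pos in simp)
  then show ?thesis by (rule eventually_mono) auto
qed

lemma kform_nonneg:
  assumes "0 \<le> e" "e \<le> \<epsilon>0"
  shows "kform e u u \<ge> 0"
proof -
  have psd: "psd_mat n (Kmat f n x e)" by (rule K_psd[OF assms])
  let ?v = "Matrix.vec n u"
  have "?v \<in> carrier_vec n" by simp
  then have ge: "scalar_prod ?v (Kmat f n x e *\<^sub>v ?v) \<ge> 0" using psd unfolding psd_mat_def by blast
  have "scalar_prod ?v (Kmat f n x e *\<^sub>v ?v) = (\<Sum>i<n. u i * (\<Sum>j<n. f (e * \<bar>x i - x j\<bar>) * u j))"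
    by (simp add: scalar_prod_def Kmat_def atLeast0LessThan)
  also have "\<dots> = kform e u u"
    unfolding kform_def by (simp add: sum_distrib_left ac_simps)
  finally show ?thesis using ge by simp
qed

lemma lam_eq_kform:
  assumes e: "\<bar>e\<bar> < \<delta>" and k: "k < n"
  shows "lam k e = kform e (eigvec k e) (eigvec k e)"
proof -
  have "kform e (eigvec k e) (eigvec k e) = (\<Sum>j<n. lam j e * pform j e (eigvec k e) (eigvec k e))"
    by (rule kform_eigen_expansion[OF e])
  also have "\<dots> = (\<Sum>j<n. if j = k then lam k e else 0)"
  proof (rule sum.cong[OF refl])
    fix j assume j: "j \<in> {..<n}"
    have "pform j e (eigvec k e) (eigvec k e) = dotn n (eigvec k e) (eigvec j e) * dotn n (eigvec k e) (eigvec j e)"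
      using pform_eigvec[OF e] j by simp
    also have "\<dots> = (if j = k then 1 else 0)"
      using eigvec_unit[OF e k] eigvec_orth[OF e k] j by auto
    finally show "lam j e * pform j e (eigvec k e) (eigvec k e) = (if j = k then lam k e else 0)" by simp
  qed
  also have "\<dots> = lam k e" using k by simp
  finally show ?thesis by simp
qed

lemma lam_nonneg:
  assumes "0 \<le> e" "e < \<delta>" "e \<le> \<epsilon>0" "k < n"
  shows "lam k e \<ge> 0"
proof -
  have "\<bar>e\<bar> < \<delta>" using assms by simp
  then show ?thesis using lam_eq_kform[of e k] kform_nonneg[of e "eigvec k e"] assms by simp
qed

lemma pform_nonneg:
  assumes "\<bar>e\<bar> < \<delta>" "k < n"
  shows "pform k e u u \<ge> 0"
  using pform_eigvec[OF assms] by simp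

lemma lam_pform_le_kform:
  assumes e: "0 \<le> e" "e < \<delta>" "e \<le> \<epsilon>0" and j: "j < n"
  shows "lam j e * pform j e u u \<le> kform e u u"
proof -
  have ae: "\<bar>e\<bar> < \<delta>" using e by simp
  have nn: "\<And>k. k \<in> {..<n} \<Longrightarrow> 0 \<le> lam k e * pform k e u u"
    using lam_nonneg[OF e] pform_nonneg[OF ae] by simp
  have "lam j e * pform j e u u \<le> (\<Sum>k<n. lam k e * pform k e u u)"
    by (rule member_le_sum[of j "{..<n}" "\<lambda>k. lam k e * pform k e u u"]) (use nn j in auto)
  also have "\<dots> = kform e u u" using kform_eigen_expansion[OF ae] by simp
  finally show ?thesis .
qed

lemma pform_abs_le:
  assumes "\<bar>e\<bar> < \<delta>" "k < n"
  shows "\<bar>pform k e u w\<bar> \<le> (pform k e u u + pform k e w w) / 2"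
proof -
  let ?a = "dotn n u (eigvec k e)" and ?b = "dotn n w (eigvec k e)"
  have "\<bar>?a * ?b\<bar> \<le> (?a * ?a + ?b * ?b) / 2"
  proof -
    have "0 \<le> (\<bar>?a\<bar> - \<bar>?b\<bar>)^2" by simp
    then show ?thesis by (simp add: power2_eq_square abs_mult algebra_simps)
  qed
  then show ?thesis using pform_eigvec[OF assms] by simp
qed

lemma P_entry_analytic:
  assumes "k < n" "i < n" "j < n"
  shows "real_analytic_near0 (\<lambda>e. P k e $$ (i,j))"
  using P_analytic[OF assms(1)] assms(2,3) unfolding mat_analytic_near0_def by blast

lemma pform_analytic:
  assumes k: "k < n"
  shows "real_analytic_near0 (\<lambda>e. pform k e u w)"
proof -
  have inner: "real_analytic_near0 (\<lambda>e. \<Sum>j<n. (u i * w j) * P k e $$ (i,j))" if "i < n" for i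
    by (rule real_analytic_near0_sum) (use P_entry_analytic[OF k that] in auto)
  have "real_analytic_near0 (\<lambda>e. \<Sum>i<n. 1 * (\<Sum>j<n. (u i * w j) * P k e $$ (i,j)))"
    by (rule real_analytic_near0_sum[where g="\<lambda>i e. \<Sum>j<n. (u i * w j) * P k e $$ (i,j)"]) (use inner in auto)
  then show ?thesis unfolding pform_def by simp
qed

lemma pform_tendsto_right:
  assumes k: "k < n"
  shows "((\<lambda>e. pform k e u w) \<longlongrightarrow> dotn n u (limvec k) * dotn n w (limvec k)) (at_right 0)"
  using real_analytic_near0_tendsto[OF pform_analytic[OF k]] pform_0[OF k]
  by (simp add: filterlim_at_split)

lemma lam_scaled_tendsto:
  assumes k: "k < n"
  shows "((\<lambda>e. lam k e / e ^ eig_order r k) \<longlongrightarrow> lt k) (at_right 0)"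
proof -
  let ?m = "eig_order r k"
  obtain C \<eta> where eta: "\<eta> > 0" and hb: "\<And>e. 0 < e \<Longrightarrow> e < \<eta> \<Longrightarrow>
      \<bar>lam k e - e ^ ?m * lt k\<bar> \<le> C * e ^ (?m + 1)"
    using lam_asymp[OF k] by blast
  have "((\<lambda>e. (lam k e - e ^ ?m * lt k) / e ^ ?m) \<longlongrightarrow> 0) (at_right 0)"
    by (rule tendsto_0_if_power_bound[OF eta hb]) simp_all
  then have "((\<lambda>e. (lam k e - e ^ ?m * lt k) / e ^ ?m + lt k) \<longlongrightarrow> 0 + lt k) (at_right 0)"
    by (intro tendsto_add tendsto_const)
  moreover have "eventually (\<lambda>e. (lam k e - e ^ ?m * lt k) / e ^ ?m + lt k = lam k e / e ^ ?m) (at_right 0)"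
    using eventually_at_right_less[of "0::real"] by (rule eventually_mono) (simp add: diff_divide_distrib)
  ultimately show ?thesis using Lim_transform_eventually by fastforce
qed

lemma lt_nonneg:
  assumes k: "k < n"
  shows "lt k \<ge> 0"
proof (rule tendsto_lowerbound[OF lam_scaled_tendsto[OF k]])
  show "eventually (\<lambda>e. lam k e / e ^ eig_order r k \<ge> 0) (at_right 0)"
    using eventually_small by (rule eventually_mono) (use lam_nonneg k in auto)
qed simp

lemma lam_scaled_tendsto_0:
  assumes k: "k < n" and a: "a < eig_order r k"
  shows "((\<lambda>e. lam k e / e ^ a) \<longlongrightarrow> 0) (at_right 0)"
proof -
  let ?m = "eig_order r k"
  have "((\<lambda>e. (lam k e / e ^ ?m) * e ^ (?m - a)) \<longlongrightarrow> lt k * 0 ^ (?m - a)) (at_right 0)"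
    by (intro tendsto_intros lam_scaled_tendsto[OF k])
  then have lim: "((\<lambda>e. (lam k e / e ^ ?m) * e ^ (?m - a)) \<longlongrightarrow> 0) (at_right 0)"
    using a by (simp add: power_0_left)
  have "eventually (\<lambda>e. (lam k e / e ^ ?m) * e ^ (?m - a) = lam k e / e ^ a) (at_right (0::real))"
    using eventually_at_right_less[of "0::real"]
  proof (rule eventually_mono)
    fix e :: real assume e: "0 < e"
    have "e ^ ?m = e ^ a * e ^ (?m - a)" using a by (simp add: power_add[symmetric])
    then show "(lam k e / e ^ ?m) * e ^ (?m - a) = lam k e / e ^ a" using e by (simp add: field_simps)
  qed
  then show ?thesis using lim by (simp add: tendsto_cong)
qed

lemma lam_mono:
  assumes e: "0 < e" "e < \<delta>" and jk: "j \<le> k" and k: "k < n"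
  shows "lam k e \<le> lam j e"
  using jk k
proof (induction k)
  case 0 then show ?case by simp
next
  case (Suc k)
  show ?case
  proof (cases "j = Suc k")
    case True then show ?thesis by simp
  next
    case False
    then have "j \<le> k" using Suc by simp
    then have "lam k e \<le> lam j e" using Suc by simp
    moreover have "lam (Suc k) e \<le> lam k e" using lam_sorted[OF e] Suc by simp
    ultimately show ?thesis by simp
  qed
qed

lemma lam_eventually_ge:
  assumes k: "k < n" and pos: "lt k > 0"
  shows "eventually (\<lambda>e. lam k e \<ge> lt k / 2 * e ^ eig_order r k) (at_right 0)"
proof -
  have "eventually (\<lambda>e. lam k e / e ^ eig_order r k > lt k / 2) (at_right 0)"
    by (rule order_tendstoD(1)[OF lam_scaled_tendsto[OF k]]) (use pos in simp)
  then have "eventually (\<lambda>e. lam k e / e ^ eig_order r k > lt k / 2 \<and> 0 < e) (at_right 0)"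
    using eventually_at_right_less[of "0::real"] by (rule eventually_conj)
  then show ?thesis
  proof (rule eventually_mono)
    fix e :: real assume h: "lam k e / e ^ eig_order r k > lt k / 2 \<and> 0 < e"
    then have pos: "e ^ eig_order r k > 0" by simp
    have "lt k / 2 < lam k e / e ^ eig_order r k" using h by simp
    then have "lt k / 2 * e ^ eig_order r k < lam k e" by (simp add: pos_less_divide_eq[OF pos])
    then show "lam k e \<ge> lt k / 2 * e ^ eig_order r k" by simp
  qed
qed

end

section \<open>Taylor expansion of the kernel form\<close>

context kernel_eigen_expansion
begin

definition dpow_form :: "nat \<Rightarrow> (nat \<Rightarrow> real) \<Rightarrow> (nat \<Rightarrow> real) \<Rightarrow> real" where
  "dpow_form m u w = (\<Sum>i<n. \<Sum>j<n. u i * w j * \<bar>x i - x j\<bar> ^ m)"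

definition moment_form :: "nat \<Rightarrow> (nat \<Rightarrow> real) \<Rightarrow> (nat \<Rightarrow> real) \<Rightarrow> real" where
  "moment_form m u w =
    (\<Sum>a\<le>m. real (m choose a) * (-1) ^ (m - a) * dotn n u (xpow a) * dotn n w (xpow (m - a)))"

lemma kform_taylor:
  assumes N: "N < 2 * r"
  shows "((\<lambda>e. (kform e u w - (\<Sum>m\<le>N. tcoef f m * e ^ m * dpow_form m u w)) / e ^ N) \<longlongrightarrow> 0) (at_right 0)"
proof -
  define R where "R e i j = (f (e * \<bar>x i - x j\<bar>) - (\<Sum>m\<le>N. tcoef f m * e ^ m * \<bar>x i - x j\<bar> ^ m)) / e ^ N"
    for e i j
  have Rlim: "((\<lambda>e. R e i j) \<longlongrightarrow> 0) (at_right 0)" for i j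
    unfolding R_def by (rule taylor_peano_remainder_scaled[OF b_pos f_smooth N]) simp
  have "((\<lambda>e. \<Sum>i<n. \<Sum>j<n. u i * w j * R e i j) \<longlongrightarrow> (\<Sum>i<n. \<Sum>j<n. u i * w j * 0)) (at_right 0)"
    by (intro tendsto_sum tendsto_mult_left Rlim)
  then have lim: "((\<lambda>e. \<Sum>i<n. \<Sum>j<n. u i * w j * R e i j) \<longlongrightarrow> 0) (at_right 0)" by simp
  have eq: "(kform e u w - (\<Sum>m\<le>N. tcoef f m * e ^ m * dpow_form m u w)) / e ^ N =
            (\<Sum>i<n. \<Sum>j<n. u i * w j * R e i j)" for e
  proof -
    have "(\<Sum>m\<le>N. tcoef f m * e ^ m * dpow_form m u w) =
          (\<Sum>m\<le>N. \<Sum>i<n. \<Sum>j<n. u i * w j * (tcoef f m * e ^ m * \<bar>x i - x j\<bar> ^ m))"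
      unfolding dpow_form_def by (simp add: sum_distrib_left ac_simps)
    also have "\<dots> = (\<Sum>i<n. \<Sum>m\<le>N. \<Sum>j<n. u i * w j * (tcoef f m * e ^ m * \<bar>x i - x j\<bar> ^ m))"
      by (rule sum.swap)
    also have "\<dots> = (\<Sum>i<n. \<Sum>j<n. \<Sum>m\<le>N. u i * w j * (tcoef f m * e ^ m * \<bar>x i - x j\<bar> ^ m))"
      by (rule sum.cong[OF refl], rule sum.swap)
    also have "\<dots> = (\<Sum>i<n. \<Sum>j<n. u i * w j * (\<Sum>m\<le>N. tcoef f m * e ^ m * \<bar>x i - x j\<bar> ^ m))"
      by (simp add: sum_distrib_left)
    finally have A: "(\<Sum>m\<le>N. tcoef f m * e ^ m * dpow_form m u w) =
          (\<Sum>i<n. \<Sum>j<n. u i * w j * (\<Sum>m\<le>N. tcoef f m * e ^ m * \<bar>x i - x j\<bar> ^ m))" .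
    have "kform e u w - (\<Sum>m\<le>N. tcoef f m * e ^ m * dpow_form m u w) =
          (\<Sum>i<n. \<Sum>j<n. u i * w j * (f (e * \<bar>x i - x j\<bar>) - (\<Sum>m\<le>N. tcoef f m * e ^ m * \<bar>x i - x j\<bar> ^ m)))"
      unfolding A kform_def by (simp add: sum_subtractf right_diff_distrib)
    then show ?thesis
      unfolding R_def by (simp add: sum_divide_distrib)
  qed
  show ?thesis unfolding eq using lim .
qed

lemma tcoef_odd_eq_0:
  assumes "odd m" "m \<le> 2 * r - 2"
  shows "tcoef f m = 0"
proof -
  define l where "l = m div 2 + 1"
  have m2: "2 * (m div 2) + 1 = m" using assms(1) by (rule odd_two_times_div_two_succ)
  have l: "m = 2 * l - 1" "1 \<le> l" unfolding l_def using m2 by auto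
  have "l < r" using l assms(2) by linarith
  then have "(deriv ^^ m) f 0 = 0" using f_odd0[OF l(2)] l(1) by simp
  then show ?thesis unfolding tcoef_def by simp
qed

text \<open>Below order \<open>2r - 1\<close> only even Taylor coefficients survive, and for even \<open>m\<close> the
  absolute value in \<open>|x\<^sub>i - x\<^sub>j|\<^sup>m\<close> disappears, so the form is a combination of moments.\<close>

lemma tcoef_dpow_form_eq_moment:
  assumes "m \<le> 2 * r - 2"
  shows "tcoef f m * dpow_form m u w = tcoef f m * moment_form m u w"
proof (cases "even m")
  case True
  then have "\<And>i j. \<bar>x i - x j\<bar> ^ m = (x i - x j) ^ m" by (simp add: power_even_abs)
  then show ?thesis
    unfolding dpow_form_def moment_form_def by (simp add: sum_sum_diff_power_binomial)
next
  case False
  then show ?thesis using tcoef_odd_eq_0[OF _ assms] by simp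
qed

lemma tcoef_dpow_form_eq_0:
  assumes m: "m \<le> 2 * r - 2"
    and h: "\<And>a. a \<le> m \<Longrightarrow> dotn n u (xpow a) = 0 \<or> dotn n w (xpow (m - a)) = 0"
  shows "tcoef f m * dpow_form m u w = 0"
proof -
  have "moment_form m u w = 0"
    unfolding moment_form_def by (rule sum.neutral) (use h in force)
  then show ?thesis using tcoef_dpow_form_eq_moment[OF m, of u w] by simp
qed

lemma kform_leading_tendsto:
  assumes N: "N < 2 * r" and z: "\<And>m. m < N \<Longrightarrow> tcoef f m * dpow_form m u w = 0"
  shows "((\<lambda>e. kform e u w / e ^ N) \<longlongrightarrow> tcoef f N * dpow_form N u w) (at_right 0)"
proof -
  let ?c = "tcoef f N * dpow_form N u w"
  have s: "(\<Sum>m\<le>N. tcoef f m * e ^ m * dpow_form m u w) = ?c * e ^ N" for e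
  proof -
    have "(\<Sum>m\<le>N. tcoef f m * e ^ m * dpow_form m u w) = tcoef f N * e ^ N * dpow_form N u w"
    proof (rule sum_eq_single)
      fix c assume "c \<in> {..N}" "c \<noteq> N"
      then have "c < N" by simp
      then have "tcoef f c * dpow_form c u w = 0" by (rule z)
      then have "(tcoef f c * dpow_form c u w) * e ^ c = 0" by simp
      then show "tcoef f c * e ^ c * dpow_form c u w = 0" by (simp only: ac_simps)
    qed auto
    then show ?thesis by (simp add: ac_simps)
  qed
  have "((\<lambda>e. (kform e u w - ?c * e ^ N) / e ^ N) \<longlongrightarrow> 0) (at_right 0)"
    using kform_taylor[OF N, of u w] unfolding s .
  then have "((\<lambda>e. (kform e u w - ?c * e ^ N) / e ^ N + ?c) \<longlongrightarrow> 0 + ?c) (at_right 0)"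
    by (intro tendsto_add tendsto_const)
  moreover have "eventually (\<lambda>e. (kform e u w - ?c * e ^ N) / e ^ N + ?c = kform e u w / e ^ N) (at_right (0::real))"
    using eventually_at_right_less[of "0::real"]
  proof (rule eventually_mono)
    fix e :: real assume "0 < e"
    then have "e ^ N \<noteq> 0" by simp
    then show "(kform e u w - ?c * e ^ N) / e ^ N + ?c = kform e u w / e ^ N"
      by (simp add: diff_divide_distrib)
  qed
  ultimately show ?thesis by (simp add: tendsto_cong)
qed

lemma kform_perp_tendsto:
  assumes t: "t < r" and u: "\<And>c. c \<le> t \<Longrightarrow> dotn n u (xpow c) = 0"
    and w: "\<And>c. c \<le> t \<Longrightarrow> dotn n w (xpow c) = 0"
  shows "((\<lambda>e. kform e u w / e ^ (2 * t + 1)) \<longlongrightarrow> tcoef f (2 * t + 1) * dpow_form (2 * t + 1) u w)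
    (at_right 0)"
proof (rule kform_leading_tendsto)
  show "2 * t + 1 < 2 * r" using t by simp
  fix m assume m: "m < 2 * t + 1"
  show "tcoef f m * dpow_form m u w = 0"
  proof (rule tcoef_dpow_form_eq_0)
    show "m \<le> 2 * r - 2" using m t by simp
    fix a assume "a \<le> m"
    then have "a \<le> t \<or> m - a \<le> t" using m by linarith
    then show "dotn n u (xpow a) = 0 \<or> dotn n w (xpow (m - a)) = 0" using u w by auto
  qed
qed

text \<open>Since \<open>\<lambda>\<^sub>j(\<epsilon>) \<ge> \<lambda>\<^sub>t(\<epsilon>) \<approx> lt t \<epsilon>\<^sup>2\<^sup>t\<close> for \<open>j \<le> t\<close> and \<open>\<lambda>\<^sub>j(\<epsilon>) \<langle>u, v\<^sub>j(\<epsilon>)\<rangle>\<^sup>2 \<le> u\<^sup>T K\<^sub>\<epsilon> u\<close>, a small quadratic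
  form forces small components along the leading eigenvectors.\<close>

lemma pform_eventually_le:
  assumes t: "t < r" and pos: "lt t > 0"
  shows "eventually (\<lambda>e. \<forall>j\<le>t. 0 \<le> pform j e u u \<and>
    pform j e u u \<le> 2 / lt t * (kform e u u / e ^ (2 * t))) (at_right 0)"
proof -
  have tn: "t < n" using t r_le_n by simp
  show ?thesis
    using eventually_conj[OF eventually_small lam_eventually_ge[OF tn pos]]
  proof (rule eventually_mono, intro allI impI)
    fix e j
    assume h: "(0 < e \<and> e < \<delta> \<and> e \<le> \<epsilon>0) \<and> lt t / 2 * e ^ eig_order r t \<le> lam t e" and j: "j \<le> t"
    have jn: "j < n" using j tn by simp
    have lb: "lt t / 2 * e ^ (2 * t) \<le> lam j e"
      using h t j tn lam_mono[of e j t] unfolding eig_order_def by force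
    have lbpos: "lt t / 2 * e ^ (2 * t) > 0" using h pos by simp
    have "pform j e u u \<le> kform e u u / lam j e"
      using lam_pform_le_kform[of e j u] h jn lb lbpos by (simp add: pos_le_divide_eq mult.commute)
    also have "\<dots> \<le> kform e u u / (lt t / 2 * e ^ (2 * t))"
      using lb lbpos kform_nonneg[of e u] h by (intro divide_left_mono) auto
    also have "\<dots> = 2 / lt t * (kform e u u / e ^ (2 * t))" by simp
    finally show "0 \<le> pform j e u u \<and> pform j e u u \<le> 2 / lt t * (kform e u u / e ^ (2 * t))"
      using pform_nonneg[of e j u] h jn by simp
  qed
qed

lemma limvec_orthogonal_if_perp:
  assumes t: "t < r" and pos: "lt t > 0" and u: "\<And>c. c \<le> t \<Longrightarrow> dotn n u (xpow c) = 0"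
    and j: "j \<le> t"
  shows "dotn n u (limvec j) = 0"
proof -
  have jn: "j < n" using j t r_le_n by simp
  let ?B = "\<lambda>e. 2 / lt t * (kform e u u / e ^ (2 * t))"
  have "((\<lambda>e. 2 / lt t * (kform e u u / e ^ (2 * t + 1)) * e) \<longlongrightarrow>
      2 / lt t * (tcoef f (2 * t + 1) * dpow_form (2 * t + 1) u u) * 0) (at_right 0)"
    by (intro tendsto_intros kform_perp_tendsto[OF t u u])
  moreover have "eventually (\<lambda>e. 2 / lt t * (kform e u u / e ^ (2 * t + 1)) * e = ?B e) (at_right 0)"
    using eventually_at_right_less[of "0::real"] by (rule eventually_mono) (simp add: field_simps)
  ultimately have B0: "(?B \<longlongrightarrow> 0) (at_right 0)" by (simp add: tendsto_cong)
  have "((\<lambda>e. pform j e u u) \<longlongrightarrow> 0) (at_right 0)"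
  proof (rule tendsto_sandwich[of "\<lambda>_. 0" _ _ ?B])
    show "eventually (\<lambda>e. 0 \<le> pform j e u u) (at_right 0)"
      using pform_eventually_le[OF t pos, of u] by (rule eventually_mono) (use j in blast)
    show "eventually (\<lambda>e. pform j e u u \<le> ?B e) (at_right 0)"
      using pform_eventually_le[OF t pos, of u] by (rule eventually_mono) (use j in blast)
  qed (simp_all only: B0 tendsto_const)
  then have "dotn n u (limvec j) * dotn n u (limvec j) = 0"
    using tendsto_unique[OF trivial_limit_at_right_real pform_tendsto_right[OF jn]] by blast
  then show ?thesis by simp
qed

end

section \<open>The Wronskian determinant identity\<close>

context kernel_eigen_expansion
begin

text \<open>For a family \<open>y\<close> with \<open>y a \<bottom> x\<^sup>c\<close> for \<open>c < a\<close>, all Taylor terms of \<open>y\<^sub>a\<^sup>T K\<^sub>\<epsilon> y\<^sub>d\<close> below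
  order \<open>a + d\<close> vanish and the term of order \<open>a + d\<close> is a Wronskian entry.\<close>

lemma kform_gs_tendsto:
  fixes y :: "nat \<Rightarrow> nat \<Rightarrow> real"
  assumes sr: "s \<le> r"
    and tri: "\<And>a c. a < s \<Longrightarrow> c < a \<Longrightarrow> dotn n (y a) (xpow c) = 0"
    and a: "a < s" and d: "d < s"
  shows "((\<lambda>e. kform e (y a) (y d) / e ^ (a + d)) \<longlongrightarrow>
     dotn n (y a) (xpow a) * ((-1) ^ d * real ((a + d) choose d) * tcoef f (a + d)) * dotn n (y d) (xpow d))
     (at_right 0)"
proof -
  let ?N = "a + d"
  have N2: "?N \<le> 2 * r - 2" using a d sr by linarith
  have vanish: "dotn n (y a) (xpow c) = 0 \<or> dotn n (y d) (xpow (m - c)) = 0"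
    if "c \<le> m" "m \<le> ?N" "m < ?N \<or> c \<noteq> a" for m c
  proof (cases "c < a")
    case False
    then have "m - c < d" using that by linarith
    then show ?thesis using tri[OF d] by simp
  qed (use tri[OF a] in simp)
  have "((\<lambda>e. kform e (y a) (y d) / e ^ ?N) \<longlongrightarrow> tcoef f ?N * dpow_form ?N (y a) (y d)) (at_right 0)"
  proof (rule kform_leading_tendsto)
    show "?N < 2 * r" using N2 r_ge1 by linarith
    fix m assume "m < ?N"
    then show "tcoef f m * dpow_form m (y a) (y d) = 0"
      using N2 vanish by (intro tcoef_dpow_form_eq_0) auto
  qed
  moreover have "moment_form ?N (y a) (y d) =
      real (?N choose a) * (-1) ^ (?N - a) * dotn n (y a) (xpow a) * dotn n (y d) (xpow (?N - a))"
    unfolding moment_form_def by (rule sum_eq_single) (use vanish in auto)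
  then have "tcoef f ?N * dpow_form ?N (y a) (y d) =
      dotn n (y a) (xpow a) * ((-1) ^ d * real ((a + d) choose d) * tcoef f (a + d)) * dotn n (y d) (xpow d)"
    unfolding tcoef_dpow_form_eq_moment[OF N2] using binomial_symmetric[of a ?N] by (simp add: mult_ac)
  ultimately show ?thesis by simp
qed

lemma head_eigensum_tendsto:
  fixes y :: "nat \<Rightarrow> nat \<Rightarrow> real"
  assumes sr: "s \<le> r"
    and tri: "\<And>a c. a < s \<Longrightarrow> c < a \<Longrightarrow> dotn n (y a) (xpow c) = 0"
    and a: "a < s" and d: "d < s"
  shows "((\<lambda>e. \<Sum>t<s. lam t e * pform t e (y a) (y d) / e ^ (a + d)) \<longlongrightarrow>
     dotn n (y a) (xpow a) * ((-1) ^ d * real ((a + d) choose d) * tcoef f (a + d)) * dotn n (y d) (xpow d)) (at_right 0)"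
proof -
  let ?L = "dotn n (y a) (xpow a) * ((-1) ^ d * real ((a + d) choose d) * tcoef f (a + d)) * dotn n (y d) (xpow d)"
  let ?T = "\<lambda>e. \<Sum>t\<in>{s..<n}. (lam t e / e ^ (a + d)) * pform t e (y a) (y d)"
  have sn: "s \<le> n" using sr r_le_n by simp
  have tail: "(?T \<longlongrightarrow> (\<Sum>t\<in>{s..<n}. 0 * (dotn n (y a) (limvec t) * dotn n (y d) (limvec t)))) (at_right 0)"
  proof (intro tendsto_sum tendsto_mult)
    fix t assume t: "t \<in> {s..<n}"
    show "((\<lambda>e. lam t e / e ^ (a + d)) \<longlongrightarrow> 0) (at_right 0)"
      by (rule lam_scaled_tendsto_0) (use t sr a d in \<open>auto simp: eig_order_def\<close>)
    show "((\<lambda>e. pform t e (y a) (y d)) \<longlongrightarrow> dotn n (y a) (limvec t) * dotn n (y d) (limvec t)) (at_right 0)"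
      by (rule pform_tendsto_right) (use t in auto)
  qed
  then have tail0: "(?T \<longlongrightarrow> 0) (at_right 0)" by simp
  have "((\<lambda>e. kform e (y a) (y d) / e ^ (a + d) - ?T e) \<longlongrightarrow> ?L - 0) (at_right 0)"
    by (intro tendsto_diff kform_gs_tendsto[OF sr tri a d] tail0)
  moreover have "eventually (\<lambda>e. kform e (y a) (y d) / e ^ (a + d) - ?T e =
        (\<Sum>t<s. lam t e * pform t e (y a) (y d) / e ^ (a + d))) (at_right 0)"
    using eventually_small
  proof (rule eventually_mono)
    fix e assume e: "0 < e \<and> e < \<delta> \<and> e \<le> \<epsilon>0"
    then have ae: "\<bar>e\<bar> < \<delta>" by simp
    have "kform e (y a) (y d) / e ^ (a + d) = (\<Sum>t<n. lam t e * pform t e (y a) (y d) / e ^ (a + d))"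
      unfolding kform_eigen_expansion[OF ae] by (simp add: sum_divide_distrib)
    also have "\<dots> = (\<Sum>t<s. lam t e * pform t e (y a) (y d) / e ^ (a + d)) + ?T e"
      by (subst sum_lessThan_split[OF sn]) simp
    finally show "kform e (y a) (y d) / e ^ (a + d) - ?T e = (\<Sum>t<s. lam t e * pform t e (y a) (y d) / e ^ (a + d))"
      by simp
  qed
  ultimately show ?thesis by (simp add: tendsto_cong)
qed

text \<open>Scaling rows by \<open>\<epsilon>\<^sup>-\<^sup>a\<close> and columns by \<open>\<epsilon>\<^sup>t\<close> leaves the determinant of the Gram factor
  unchanged, which moves the powers \<open>\<epsilon>\<^sup>-\<^sup>(\<^sup>a\<^sup>+\<^sup>d\<^sup>)\<close> onto the eigenvalues.\<close>

lemma det_head_eigensum: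
  fixes y :: "nat \<Rightarrow> nat \<Rightarrow> real"
  assumes sn: "s \<le> n" and e: "0 < e" "e < \<delta>"
  shows "det (Matrix.mat s s (\<lambda>(a,d). \<Sum>t<s. lam t e * pform t e (y a) (y d) / e ^ (a + d))) =
         det (Matrix.mat s s (\<lambda>(a,d). \<Sum>t<s. pform t e (y a) (y d))) * (\<Prod>t<s. lam t e / e ^ (2 * t))"
proof -
  have ae: "\<bar>e\<bar> < \<delta>" using e by simp
  define G where "G a t = dotn n (y a) (eigvec t e)" for a t
  define M where "M a t = (1 / e ^ a) * G a t * e ^ t" for a t
  have PG: "pform t e (y a) (y d) = G a t * G d t" if "t < s" for t a d
    unfolding G_def using pform_eigvec[OF ae] that sn by simp
  have m1: "Matrix.mat s s (\<lambda>(a,d). \<Sum>t<s. lam t e * pform t e (y a) (y d) / e ^ (a + d)) =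
            Matrix.mat s s (\<lambda>(a,d). \<Sum>t<s. M a t * (lam t e / e ^ (2 * t)) * M d t)"
  proof (rule mat_cong, rule sum.cong[OF refl])
    fix a d t assume t: "t \<in> {..<s}"
    have "M a t * (lam t e / e ^ (2 * t)) * M d t = lam t e * (G a t * G d t) / e ^ (a + d)"
    proof -
      have "e ^ (2 * t) = e ^ t * e ^ t" by (simp add: mult_2 power_add)
      then show ?thesis unfolding M_def using e by (simp add: field_simps power_add)
    qed
    then show "lam t e * pform t e (y a) (y d) / e ^ (a + d) = M a t * (lam t e / e ^ (2 * t)) * M d t"
      using PG t by simp
  qed
  have m2: "Matrix.mat s s (\<lambda>(a,d). \<Sum>t<s. pform t e (y a) (y d)) =
            Matrix.mat s s (\<lambda>(a,d). \<Sum>t<s. G a t * 1 * G d t)"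
    by (rule mat_cong, rule sum.cong[OF refl]) (use PG in simp)
  have dM: "det (Matrix.mat s s (\<lambda>(a,t). M a t)) = det (Matrix.mat s s (\<lambda>(a,t). G a t))"
  proof -
    have "det (Matrix.mat s s (\<lambda>(a,t). M a t)) = det (Matrix.mat s s (\<lambda>(a,t). (1 / e ^ a) * G a t * e ^ t))"
      unfolding M_def ..
    also have "\<dots> = (\<Prod>a<s. 1 / e ^ a) * (\<Prod>t<s. e ^ t) * det (Matrix.mat s s (\<lambda>(a,t). G a t))"
      by (rule det_scale_rows_cols)
    also have "(\<Prod>a<s. 1 / e ^ a) * (\<Prod>t<s. e ^ t) = (\<Prod>a<s. 1 / e ^ a * e ^ a)"
      by (simp only: prod.distrib)
    finally show ?thesis using e by simp
  qed
  show ?thesis unfolding m1 m2 det_mult_diag_transpose dM by simp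
qed

lemma det_head_eigensum_tendsto:
  fixes y :: "nat \<Rightarrow> nat \<Rightarrow> real"
  assumes sr: "s \<le> r"
  shows "((\<lambda>e. det (Matrix.mat s s (\<lambda>(a,d). \<Sum>t<s. lam t e * pform t e (y a) (y d) / e ^ (a + d))))
    \<longlongrightarrow> det (Matrix.mat s s (\<lambda>(a,d). \<Sum>t<s. dotn n (y a) (limvec t) * dotn n (y d) (limvec t)))
      * (\<Prod>t<s. lt t)) (at_right 0)"
proof -
  have sn: "s \<le> n" using sr r_le_n by simp
  have "((\<lambda>e. det (Matrix.mat s s (\<lambda>(a,d). \<Sum>t<s. pform t e (y a) (y d)))) \<longlongrightarrow>
      det (Matrix.mat s s (\<lambda>(a,d). \<Sum>t<s. dotn n (y a) (limvec t) * dotn n (y d) (limvec t)))) (at_right 0)"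
    using sn by (intro tendsto_det tendsto_sum pform_tendsto_right) auto
  moreover have "((\<lambda>e. \<Prod>t<s. lam t e / e ^ (2 * t)) \<longlongrightarrow> (\<Prod>t<s. lt t)) (at_right 0)"
  proof (rule tendsto_prod)
    fix t assume "t \<in> {..<s}"
    then have "eig_order r t = 2 * t" "t < n" using sr sn unfolding eig_order_def by auto
    then show "((\<lambda>e. lam t e / e ^ (2 * t)) \<longlongrightarrow> lt t) (at_right 0)" using lam_scaled_tendsto by metis
  qed
  moreover have "eventually (\<lambda>e.
      det (Matrix.mat s s (\<lambda>(a,d). \<Sum>t<s. pform t e (y a) (y d))) * (\<Prod>t<s. lam t e / e ^ (2 * t)) =
      det (Matrix.mat s s (\<lambda>(a,d). \<Sum>t<s. lam t e * pform t e (y a) (y d) / e ^ (a + d)))) (at_right 0)"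
    using eventually_small by (rule eventually_mono) (use det_head_eigensum[OF sn] in auto)
  ultimately show ?thesis by (blast intro: Lim_transform_eventually tendsto_mult)
qed

lemma det_wronskian_identity:
  fixes y :: "nat \<Rightarrow> nat \<Rightarrow> real"
  assumes s1: "1 \<le> s" and sr: "s \<le> r"
    and tri: "\<And>a c. a < s \<Longrightarrow> c < a \<Longrightarrow> dotn n (y a) (xpow c) = 0"
  shows "(\<Prod>a<s. dotn n (y a) (xpow a)) ^ 2 * det (Wron f (s - 1)) =
    det (Matrix.mat s s (\<lambda>(a,d). \<Sum>t<s. dotn n (y a) (limvec t) * dotn n (y d) (limvec t))) * (\<Prod>t<s. lt t)"
proof -
  let ?rho = "\<lambda>a. dotn n (y a) (xpow a)"
  let ?W = "\<lambda>a d. (-1) ^ d * real ((a + d) choose d) * tcoef f (a + d)"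
  have "((\<lambda>e. det (Matrix.mat s s (\<lambda>(a,d). \<Sum>t<s. lam t e * pform t e (y a) (y d) / e ^ (a + d))))
      \<longlongrightarrow> det (Matrix.mat s s (\<lambda>(a,d). ?rho a * ?W a d * ?rho d))) (at_right 0)"
    by (rule tendsto_det) (rule head_eigensum_tendsto[OF sr tri])
  then have "det (Matrix.mat s s (\<lambda>(a,d). ?rho a * ?W a d * ?rho d)) =
      det (Matrix.mat s s (\<lambda>(a,d). \<Sum>t<s. dotn n (y a) (limvec t) * dotn n (y d) (limvec t))) * (\<Prod>t<s. lt t)"
    using tendsto_unique[OF trivial_limit_at_right_real _ det_head_eigensum_tendsto[OF sr]] by blast
  moreover have "det (Matrix.mat s s (\<lambda>(a,d). ?rho a * ?W a d * ?rho d)) =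
      (\<Prod>a<s. ?rho a) * (\<Prod>t<s. ?rho t) * det (Matrix.mat s s (\<lambda>(a,d). ?W a d))"
    by (rule det_scale_rows_cols)
  moreover have "Matrix.mat s s (\<lambda>(a,d). ?W a d) = Wron f (s - 1)"
    unfolding Wron_def using s1 by simp
  ultimately show ?thesis by (simp add: power2_eq_square)
qed

end

section \<open>Leading eigenvalues and eigenvectors\<close>

context kernel_eigen_expansion
begin

text \<open>If \<open>lt T > 0\<close>, then \<open>p 0, \<dots>, p T\<close> lie in the span of \<open>y 0, \<dots>, y T\<close>: the residual of
  \<open>p j\<close> is orthogonal to \<open>1, x, \<dots>, x\<^sup>T\<close>, hence to \<open>p j\<close> itself.\<close>

lemma limvec_gs_expansion:
  assumes on: "orthonormal_or_zero n s y" and sp: "spans_monomials n x s y" and Ts: "T < s" and Tr: "T < r"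
    and pos: "lt T > 0" and j: "j \<le> T" and i: "i < n"
  shows "limvec j i = (\<Sum>k\<le>T. dotn n (y k) (limvec j) * y k i)"
proof -
  define c where "c k = dotn n (y k) (limvec j)" for k
  define u where "u = (\<lambda>i. limvec j i - (\<Sum>k\<le>T. c k * y k i))"
  have u_perp_monomials: "dotn n u (xpow d) = 0" if d: "d \<le> T" for d
  proof -
    have ds: "d < s" using d Ts by simp
    have "dotn n u (xpow d) = dotn n (limvec j) (xpow d) - (\<Sum>k\<le>T. c k * dotn n (y k) (xpow d))"
      unfolding u_def by (simp add: dotn_diff_left dotn_sum_left)
    also have "dotn n (limvec j) (xpow d) = (\<Sum>k\<le>d. dotn n (y k) (xpow d) * dotn n (limvec j) (y k))"
      by (rule monomial_expand[OF sp ds])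
    also have "(\<Sum>k\<le>T. c k * dotn n (y k) (xpow d)) = (\<Sum>k\<le>d. c k * dotn n (y k) (xpow d))"
    proof (rule sum.mono_neutral_right)
      show "{..d} \<subseteq> {..T}" using d by auto
      show "\<forall>k\<in>{..T} - {..d}. c k * dotn n (y k) (xpow d) = 0"
        using gs_orthogonal_lower[OF on sp] Ts by auto
    qed auto
    finally show ?thesis unfolding c_def by (simp add: dotn_comm mult.commute)
  qed
  have u_perp_limvec: "dotn n u (limvec j) = 0"
    by (rule limvec_orthogonal_if_perp[OF Tr pos u_perp_monomials j])
  have u_perp_gs: "dotn n u (y k) = 0" if k: "k \<le> T" for k
  proof -
    have ks: "k < s" using k Ts by simp
    have "dotn n u (y k) = dotn n (limvec j) (y k) - (\<Sum>m\<le>T. c m * dotn n (y m) (y k))"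
      unfolding u_def by (simp add: dotn_diff_left dotn_sum_left)
    also have "(\<Sum>m\<le>T. c m * dotn n (y m) (y k)) = c k * dotn n (y k) (y k)"
    proof (rule sum_eq_single)
      fix m assume "m \<in> {..T}" "m \<noteq> k"
      then show "c m * dotn n (y m) (y k) = 0" using on ks Ts unfolding orthonormal_or_zero_def by auto
    qed (use k in auto)
    finally show ?thesis using orthonormal_or_zero_proj[OF on ks, of "limvec j"] unfolding c_def
      by (simp add: dotn_comm)
  qed
  have "dotn n u u = dotn n u (limvec j) - (\<Sum>k\<le>T. c k * dotn n u (y k))"
    by (subst (2) u_def) (simp add: dotn_diff_right dotn_sum_right)
  then have "dotn n u u = 0" using u_perp_limvec u_perp_gs by simp
  then show ?thesis using dotn_self_eq_0[of n u i] i unfolding u_def c_def by simp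
qed

lemma limvec_eq_sign_gs:
  assumes sr: "s \<le> r" and on: "orthonormal_or_zero n s y" and sp: "spans_monomials n x s y"
    and pos: "\<And>t. t < s \<Longrightarrow> lt t > 0" and "t < s"
  shows "dotn n (y t) (y t) = 1 \<and> (\<exists>\<sigma>. \<sigma>\<^sup>2 = 1 \<and> (\<forall>i<n. limvec t i = \<sigma> * y t i))"
  using \<open>t < s\<close>
proof (induction t rule: less_induct)
  case (less t)
  have tr: "t < r" and tn: "t < n" using less.prems sr r_le_n by auto
  define c where "c j = dotn n (y j) (limvec t)" for j
  have cz: "c j = 0" if j: "j < t" for j
  proof -
    obtain \<sigma> where "\<forall>i<n. limvec j i = \<sigma> * y j i" using less.IH[OF j] j less.prems by auto
    then have "\<forall>i<n. y j i = \<sigma> * limvec j i"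
      using less.IH[OF j] j less.prems by (auto simp: power2_eq_square)
    then have "c j = \<sigma> * dotn n (limvec j) (limvec t)"
      unfolding c_def dotn_scale_left[symmetric] by (intro dotn_cong) auto
    then show ?thesis using limvec_orth[of j t] j tn by simp
  qed
  have pt: "limvec t i = c t * y t i" if "i < n" for i
  proof -
    have "limvec t i = (\<Sum>j\<le>t. c j * y j i)"
      unfolding c_def by (rule limvec_gs_expansion[OF on sp less.prems tr pos[OF less.prems] order_refl that])
    also have "\<dots> = c t * y t i" by (rule sum_eq_single) (use cz in auto)
    finally show ?thesis .
  qed
  have "1 = dotn n (limvec t) (limvec t)" using limvec_unit[OF tn] by simp
  also have "\<dots> = dotn n (\<lambda>i. c t * y t i) (\<lambda>i. c t * y t i)" by (rule dotn_cong) (use pt in auto)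
  also have "\<dots> = c t * (c t * dotn n (y t) (y t))" by (simp only: dotn_scale_left dotn_scale_right)
  finally have one: "1 = c t * (c t * dotn n (y t) (y t))" .
  have yy: "dotn n (y t) (y t) = 1"
    using on less.prems one unfolding orthonormal_or_zero_def by (metis mult_zero_right zero_neq_one)
  then have "(c t)\<^sup>2 = 1" using one by (simp add: power2_eq_square)
  then show ?case using yy pt by blast
qed

lemma eigenvalue_product:
  assumes s1: "1 \<le> s" and sr: "s \<le> r"
  shows "(\<Prod>t<s. lt t) = det (transpose_mat (Vand n x (s - 1)) * Vand n x (s - 1)) * det (Wron f (s - 1))"
proof -
  have sn: "s \<le> n" using sr r_le_n by simp
  obtain y where on: "orthonormal_or_zero n s y" and sp: "spans_monomials n x s y"
    using gram_schmidt_monomials by blast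
  let ?H = "Matrix.mat s s (\<lambda>(a,d). \<Sum>t<s. dotn n (y a) (limvec t) * dotn n (y d) (limvec t))"
  have wron: "(\<Prod>a<s. dotn n (y a) (xpow a))\<^sup>2 * det (Wron f (s - 1)) = det ?H * (\<Prod>t<s. lt t)"
    using gs_orthogonal_lower[OF on sp] by (intro det_wronskian_identity[OF s1 sr]) blast
  have gram: "det (transpose_mat (Vand n x (s - 1)) * Vand n x (s - 1)) = (\<Prod>a<s. dotn n (y a) (xpow a))\<^sup>2"
    by (rule det_vandermonde_gram[OF on sp s1])
  show ?thesis
  proof (cases "(\<Prod>t<s. lt t) = 0")
    case True then show ?thesis using wron gram by simp
  next
    case False
    then have pos: "lt t > 0" if "t < s" for t
      using lt_nonneg[of t] that sn by (metis finite_lessThan lessThan_iff less_eq_real_def order_less_le_trans prod_zero_iff)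
    obtain \<sigma> where \<sigma>: "\<And>t. t < s \<Longrightarrow> dotn n (y t) (y t) = 1 \<and> (\<sigma> t)\<^sup>2 = 1 \<and> (\<forall>i<n. limvec t i = \<sigma> t * y t i)"
      using limvec_eq_sign_gs[OF sr on sp pos] by metis
    have dy: "dotn n (y a) (limvec t) = (if a = t then \<sigma> t else 0)" if "a < s" "t < s" for a t
    proof -
      have "dotn n (y a) (limvec t) = \<sigma> t * dotn n (y a) (y t)"
        unfolding dotn_scale_right[symmetric] using \<sigma>[OF that(2)] by (intro dotn_cong) auto
      then show ?thesis using \<sigma>[OF that(2)] on that unfolding orthonormal_or_zero_def by auto
    qed
    have "?H = 1\<^sub>m s"
    proof (rule eq_matI)
      fix a d assume "a < dim_row (1\<^sub>m s :: real mat)" "d < dim_col (1\<^sub>m s :: real mat)"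
      then have a: "a < s" and d: "d < s" by auto
      have "(\<Sum>t<s. dotn n (y a) (limvec t) * dotn n (y d) (limvec t)) =
          dotn n (y a) (limvec a) * dotn n (y d) (limvec a)"
        by (rule sum_eq_single) (use a dy in auto)
      also have "\<dots> = (if a = d then 1 else 0)"
        using dy a d \<sigma>[OF a] by (cases "a = d") (simp_all add: power2_eq_square)
      finally show "?H $$ (a,d) = 1\<^sub>m s $$ (a,d)" using a d by simp
    qed auto
    then show ?thesis using wron gram by simp
  qed
qed

text \<open>If some Gram--Schmidt step degenerates, the limiting eigenvectors \<open>p 0, \<dots>, p (s - 1)\<close>
  cannot all fit into the span of \<open>y 0, \<dots>, y (s - 1)\<close>, so \<open>lt (s - 1)\<close> must vanish.\<close>

lemma gs_unit_if_lt_pos: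
  assumes sr: "s \<le> r" and s1: "1 \<le> s" and on: "orthonormal_or_zero n s y"
    and sp: "spans_monomials n x s y" and pos: "lt (s - 1) > 0" and k: "k < s"
  shows "dotn n (y k) (y k) = 1"
proof -
  have sn: "s \<le> n" using sr r_le_n by simp
  define C where "C j m = dotn n (y m) (limvec j)" for j m
  have ex: "limvec j i = (\<Sum>m<s. C j m * y m i)" if "j < s" "i < n" for j i
  proof -
    have "{..s - 1} = {..<s}" using s1 by auto
    then show ?thesis
      using limvec_gs_expansion[OF on sp _ _ pos _ that(2), of j] that s1 sr unfolding C_def by simp
  qed
  have gram: "dotn n (limvec j) (limvec l) = (\<Sum>m<s. C j m * dotn n (y m) (y m) * C l m)"
    if "j < s" "l < s" for j l
  proof -
    have "dotn n (limvec j) (limvec l) = dotn n (\<lambda>i. \<Sum>m<s. C j m * y m i) (limvec l)"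
      by (rule dotn_cong) (use ex that in auto)
    also have "\<dots> = (\<Sum>m<s. C j m * C l m)" unfolding dotn_sum_left C_def ..
    also have "\<dots> = (\<Sum>m<s. C j m * dotn n (y m) (y m) * C l m)"
      using orthonormal_or_zero_proj[OF on] unfolding C_def by (intro sum.cong) (auto simp: ac_simps)
    finally show ?thesis .
  qed
  have "Matrix.mat s s (\<lambda>(j,l). \<Sum>m<s. C j m * dotn n (y m) (y m) * C l m) = 1\<^sub>m s"
    using gram limvec_unit limvec_orth sn by (intro eq_matI) (auto simp flip: gram)
  then have "1 = det (Matrix.mat s s (\<lambda>(j,m). C j m)) ^ 2 * (\<Prod>m<s. dotn n (y m) (y m))"
    using det_mult_diag_transpose[of s C "\<lambda>m. dotn n (y m) (y m)"] by simp
  then have "dotn n (y k) (y k) \<noteq> 0" using k by (metis lessThan_iff mult_zero_right prod_zero_iff finite_lessThan zero_neq_one)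
  then show ?thesis using on k unfolding orthonormal_or_zero_def by auto
qed

lemma lt_eq_0_if_gs_degenerate:
  assumes sr: "s \<le> r" and s1: "1 \<le> s" and on: "orthonormal_or_zero n s y"
    and sp: "spans_monomials n x s y" and nz: "gs_nondegenerate n x s y"
    and k: "k < s" and rho: "dotn n (y k) (xpow k) = 0"
  shows "lt (s - 1) = 0"
proof (rule ccontr)
  assume "lt (s - 1) \<noteq> 0"
  moreover have "s - 1 < n" using sr s1 r_le_n by linarith
  ultimately have "lt (s - 1) > 0" using lt_nonneg[of "s - 1"] by simp
  then have "dotn n (y k) (y k) = 1" by (rule gs_unit_if_lt_pos[OF sr s1 on sp _ k])
  then show False using nz k rho unfolding gs_nondegenerate_def by auto
qed

lemma eigenvalue_ratio:
  assumes s1: "1 < s" and sr: "s \<le> r" and dW: "det (Wron f (s - 2)) \<noteq> 0"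
  shows "lt (s - 1) = det (transpose_mat (Vand n x (s - 1)) * Vand n x (s - 1))
                     / det (transpose_mat (Vand n x (s - 2)) * Vand n x (s - 2))
                   * (det (Wron f (s - 1)) / det (Wron f (s - 2)))"
proof -
  have P1: "(\<Prod>t<s. lt t) =
      det (transpose_mat (Vand n x (s - 1)) * Vand n x (s - 1)) * det (Wron f (s - 1))"
    using eigenvalue_product[of s] s1 sr by simp
  have P0: "(\<Prod>t<s - 1. lt t) =
      det (transpose_mat (Vand n x (s - 2)) * Vand n x (s - 2)) * det (Wron f (s - 2))"
    using eigenvalue_product[of "s - 1"] s1 sr by (simp add: numeral_2_eq_2)
  have split: "(\<Prod>t<s. lt t) = (\<Prod>t<s - 1. lt t) * lt (s - 1)"
  proof -
    have "s = Suc (s - 1)" using s1 by simp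
    then show ?thesis by (metis prod.lessThan_Suc)
  qed
  show ?thesis
  proof (cases "det (transpose_mat (Vand n x (s - 2)) * Vand n x (s - 2)) = 0")
    case False
    have ne: "(\<Prod>t<s - 1. lt t) \<noteq> 0" using P0 False dW by simp
    have "lt (s - 1) = (\<Prod>t<s. lt t) / (\<Prod>t<s - 1. lt t)" using split ne by simp
    then show ?thesis unfolding P1 P0 using False dW by (simp add: field_simps)
  next
    case True
    obtain y where on: "orthonormal_or_zero n s y" and sp: "spans_monomials n x s y"
      and nz: "gs_nondegenerate n x s y"
      using gram_schmidt_monomials by blast
    have "det (transpose_mat (Vand n x (s - 1 - 1)) * Vand n x (s - 1 - 1)) =
        (\<Prod>a<s - 1. dotn n (y a) (xpow a)) ^ 2"
      by (rule det_vandermonde_gram[OF orthonormal_or_zero_mono[OF on] spans_monomials_mono[OF sp]]) (use s1 in auto)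
    moreover have "s - 1 - 1 = s - 2" by simp
    ultimately have "(\<Prod>a<s - 1. dotn n (y a) (xpow a)) = 0" using True by simp
    then obtain a where a: "a < s - 1" "dotn n (y a) (xpow a) = 0" by auto
    have "lt (s - 1) = 0"
      by (rule lt_eq_0_if_gs_degenerate[OF sr _ on sp nz, of a]) (use a s1 in auto)
    then show ?thesis using True by simp
  qed
qed

lemma lt_pos_if_wronskian:
  assumes inj: "inj_on x {..<n}" and s1: "1 \<le> s" and sr: "s \<le> r"
    and dW: "det (Wron f (s - 1)) \<noteq> 0" and t: "t < s"
  shows "lt t > 0"
proof -
  have sn: "s \<le> n" using sr r_le_n by simp
  have "(\<Prod>t<s. lt t) \<noteq> 0"
    using eigenvalue_product[OF s1 sr] det_vandermonde_gram_nonzero[OF inj s1 sn] dW by simp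
  then show ?thesis using lt_nonneg[of t] t sn by (simp add: less_le)
qed

lemma limvec_eq_sign_QR:
  assumes inj: "inj_on x {..<n}" and s1: "1 \<le> s" and sr: "s \<le> r"
    and dW: "det (Wron f (s - 1)) \<noteq> 0" and qr: "full_QR (Vand n x (s - 1)) Q" and k: "k < s"
  shows "\<exists>\<sigma>. (\<sigma> = 1 \<or> \<sigma> = -1) \<and> (\<forall>i<n. limvec k i = \<sigma> * Q $$ (i,k))"
proof -
  have sn: "s \<le> n" using sr r_le_n by simp
  have on: "orthonormal_or_zero n s (\<lambda>k i. Q $$ (i,k))"
    using full_QR_props(2)[OF qr s1 sn] sn
    unfolding orthonormal_basis_def orthonormal_or_zero_def by auto
  obtain \<sigma> where "\<sigma>\<^sup>2 = 1" "\<forall>i<n. limvec k i = \<sigma> * Q $$ (i,k)"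
    using limvec_eq_sign_gs[OF sr on full_QR_props(3)[OF qr s1 sn] lt_pos_if_wronskian[OF inj s1 sr dW] k]
    by auto
  then show ?thesis by (auto simp: power2_eq_1_iff)
qed

lemma limvec_eq_QR_col:
  assumes inj: "inj_on x {..<n}" and s1: "1 \<le> s" and sr: "s \<le> r"
    and dW: "det (Wron f (s - 1)) \<noteq> 0" and qr: "full_QR (Vand n x (s - 1)) Q" and k: "k < s"
  shows "p k = col Q k \<or> p k = - col Q k"
proof -
  have sn: "s \<le> n" using sr r_le_n by simp
  have Q: "Q \<in> carrier_mat n n" by (rule full_QR_props(1)[OF qr s1 sn])
  have pk: "p k \<in> carrier_vec n" using p_unit k sn by simp
  obtain \<sigma> :: real where "\<sigma> = 1 \<or> \<sigma> = -1" "\<forall>i<n. limvec k i = \<sigma> * Q $$ (i,k)"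
    using limvec_eq_sign_QR[OF inj s1 sr dW qr k] by blast
  then show ?thesis using pk Q k sn by (auto intro!: eq_vecI simp: limvec_def)
qed

lemma limvec_orthonormal_basis: "orthonormal_basis n limvec"
  using limvec_unit limvec_orth unfolding orthonormal_basis_def by auto

lemma QR_head_orthogonal_limvec_tail:
  assumes inj: "inj_on x {..<n}" and dW: "det (Wron f (r - 1)) \<noteq> 0"
    and qr: "full_QR (Vand n x (r - 1)) Q" and k: "k < r" and t: "r \<le> t" "t < n"
  shows "dotn n (\<lambda>i. Q $$ (i,k)) (limvec t) = 0" and "dotn n (limvec k) (\<lambda>i. Q $$ (i,t)) = 0"
proof -
  obtain \<sigma> :: real where \<sigma>: "\<sigma> = 1 \<or> \<sigma> = -1" "\<forall>i<n. limvec k i = \<sigma> * Q $$ (i,k)"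
    using limvec_eq_sign_QR[OF inj r_ge1 order_refl dW qr k] by blast
  then have "\<And>i. i < n \<Longrightarrow> Q $$ (i,k) = \<sigma> * limvec k i" by auto
  then have "dotn n (\<lambda>i. Q $$ (i,k)) (limvec t) = \<sigma> * dotn n (limvec k) (limvec t)"
    unfolding dotn_scale_left[symmetric] by (rule dotn_cong) simp_all
  then show "dotn n (\<lambda>i. Q $$ (i,k)) (limvec t) = 0" using limvec_orth[of k t] k t by simp
  have "dotn n (limvec k) (\<lambda>i. Q $$ (i,t)) = \<sigma> * dotn n (\<lambda>i. Q $$ (i,k)) (\<lambda>i. Q $$ (i,t))"
    unfolding dotn_scale_left[symmetric] using \<sigma>(2) by (intro dotn_cong) simp_all
  then show "dotn n (limvec k) (\<lambda>i. Q $$ (i,t)) = 0"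
    using full_QR_props(2)[OF qr r_ge1 r_le_n] k t unfolding orthonormal_basis_def by simp
qed

lemma col_space_limvecs_eq:
  assumes inj: "inj_on x {..<n}" and dW: "det (Wron f (r - 1)) \<noteq> 0"
    and qr: "full_QR (Vand n x (r - 1)) Q"
  shows "col_space (mat_of_cols n (map p [r..<n])) = col_space (last_cols r Q)"
proof -
  have Q: "Q \<in> carrier_mat n n" by (rule full_QR_props(1)[OF qr r_ge1 r_le_n])
  note tail = col_space_subset_orthonormal_tail[OF r_le_n, where a=limvec and b="\<lambda>k i. Q $$ (i,k)"]
    col_space_subset_orthonormal_tail[OF r_le_n, where a="\<lambda>k i. Q $$ (i,k)" and b=limvec]
  show ?thesis
  proof
    show "col_space (mat_of_cols n (map p [r..<n])) \<subseteq> col_space (last_cols r Q)"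
      using Q full_QR_props(2)[OF qr r_ge1 r_le_n] QR_head_orthogonal_limvec_tail(1)[OF inj dW qr]
      by (intro tail(1)) (auto simp: mat_of_cols_def last_cols_def limvec_def)
    show "col_space (last_cols r Q) \<subseteq> col_space (mat_of_cols n (map p [r..<n]))"
      using Q limvec_orthonormal_basis QR_head_orthogonal_limvec_tail(2)[OF inj dW qr]
      by (intro tail(2)) (auto simp: mat_of_cols_def last_cols_def limvec_def)
  qed
qed

end

section \<open>The eigenvalues of order \<open>2r - 1\<close>\<close>

context kernel_eigen_expansion
begin

text \<open>For \<open>v\<close> orthogonal to all monomials of degree \<open>< r\<close>, \<open>\<langle>v, v\<^sub>t(\<epsilon>)\<rangle>\<^sup>2 = O(\<epsilon>\<^sup>2\<^sup>r\<^sup>-\<^sup>1\<^sup>-\<^sup>2\<^sup>t)\<close>;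
  being nonnegative and analytic of odd order, it is even \<open>o(\<epsilon>\<^sup>2\<^sup>r\<^sup>-\<^sup>1\<^sup>-\<^sup>2\<^sup>t)\<close>.\<close>

lemma pform_perp_power_bound:
  assumes t: "t < r" and ltp: "lt t > 0" and v: "\<And>c. c \<le> r - 1 \<Longrightarrow> dotn n v (xpow c) = 0"
  obtains C \<eta> where "\<eta> > 0"
    "\<And>e. 0 < e \<Longrightarrow> e < \<eta> \<Longrightarrow> \<bar>pform t e v v\<bar> \<le> C * e ^ (2 * r - 1 - 2 * t)"
proof -
  let ?N = "2 * r - 1" and ?N' = "2 * r - 1 - 2 * t"
  have Nsplit: "?N = 2 * t + ?N'" using t by simp
  have "2 * (r - 1) + 1 = ?N" using r_ge1 by simp
  then obtain cv where "((\<lambda>e. kform e v v / e ^ ?N) \<longlongrightarrow> cv) (at_right 0)"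
    using kform_perp_tendsto[of "r - 1" v v] r_ge1 v by fastforce
  then have "eventually (\<lambda>e. dist (kform e v v / e ^ ?N) cv < 1) (at_right 0)"
    by (rule tendstoD) simp
  then have "eventually (\<lambda>e. kform e v v / e ^ ?N \<le> \<bar>cv\<bar> + 1) (at_right 0)"
    by (rule eventually_mono) (auto simp: dist_real_def)
  then have "eventually (\<lambda>e. kform e v v / e ^ ?N \<le> \<bar>cv\<bar> + 1 \<and>
      (\<forall>j\<le>t. 0 \<le> pform j e v v \<and> pform j e v v \<le> 2 / lt t * (kform e v v / e ^ (2 * t))) \<and> 0 < e)
      (at_right 0)"
    by (intro eventually_conj pform_eventually_le[OF t ltp] eventually_at_right_less)
  then have "eventually (\<lambda>e. \<bar>pform t e v v\<bar> \<le> (2 / lt t * (\<bar>cv\<bar> + 1)) * e ^ ?N') (at_right 0)"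
  proof (rule eventually_mono, elim conjE)
    fix e :: real
    assume bound: "kform e v v / e ^ ?N \<le> \<bar>cv\<bar> + 1"
      and h: "\<forall>j\<le>t. 0 \<le> pform j e v v \<and> pform j e v v \<le> 2 / lt t * (kform e v v / e ^ (2 * t))"
      and e: "0 < e"
    have "kform e v v / e ^ (2 * t) = kform e v v / e ^ ?N * e ^ ?N'"
      using e by (subst Nsplit) (simp add: power_add)
    also have "\<dots> \<le> (\<bar>cv\<bar> + 1) * e ^ ?N'"
      using bound e by (intro mult_right_mono) auto
    finally have "2 / lt t * (kform e v v / e ^ (2 * t)) \<le> 2 / lt t * ((\<bar>cv\<bar> + 1) * e ^ ?N')"
      using ltp by (intro mult_left_mono) auto
    moreover have "0 \<le> pform t e v v" "pform t e v v \<le> 2 / lt t * (kform e v v / e ^ (2 * t))"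
      using h by auto
    ultimately show "\<bar>pform t e v v\<bar> \<le> (2 / lt t * (\<bar>cv\<bar> + 1)) * e ^ ?N'"
      by (simp only: abs_of_nonneg mult.assoc)
  qed
  then obtain \<eta> where "\<eta> > 0"
    and "\<And>e. 0 < e \<Longrightarrow> e < \<eta> \<Longrightarrow> \<bar>pform t e v v\<bar> \<le> (2 / lt t * (\<bar>cv\<bar> + 1)) * e ^ ?N'"
    unfolding eventually_at_right_field by auto
  then show thesis by (rule that)
qed

lemma head_eigenterm_diag_negligible:
  assumes t: "t < r" and ltp: "lt t > 0" and v: "\<And>c. c \<le> r - 1 \<Longrightarrow> dotn n v (xpow c) = 0"
  shows "((\<lambda>e. lam t e * pform t e v v / e ^ (2 * r - 1)) \<longlongrightarrow> 0) (at_right 0)"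
proof -
  have tn: "t < n" using t r_le_n by simp
  let ?N = "2 * r - 1" and ?N' = "2 * r - 1 - 2 * t"
  have Nsplit: "?N = 2 * t + ?N'" using t by simp
  have "?N' = 2 * (r - t - 1) + 1" using t by simp
  then have oddN': "odd ?N'" by simp
  obtain C \<eta> where eta: "\<eta> > 0" and hb: "\<And>e. 0 < e \<Longrightarrow> e < \<eta> \<Longrightarrow> \<bar>pform t e v v\<bar> \<le> C * e ^ ?N'"
    using pform_perp_power_bound[OF t ltp v] by blast
  have "((\<lambda>e. pform t e v v / e ^ ?N') \<longlongrightarrow> 0) (at_right 0)"
    by (rule nonneg_analytic_odd_order_tendsto_0[OF pform_analytic[OF tn] delta_pos _ oddN' eta hb])
      (rule pform_nonneg[OF _ tn])
  then have "((\<lambda>e. (lam t e / e ^ (2 * t)) * (pform t e v v / e ^ ?N')) \<longlongrightarrow> lt t * 0) (at_right 0)"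
    using lam_scaled_tendsto[OF tn] t unfolding eig_order_def by (intro tendsto_mult) auto
  moreover have "eventually (\<lambda>e. (lam t e / e ^ (2 * t)) * (pform t e v v / e ^ ?N') =
      lam t e * pform t e v v / e ^ ?N) (at_right (0::real))"
    using eventually_at_right_less[of "0::real"]
    by (rule eventually_mono) (subst Nsplit, simp add: power_add)
  ultimately show ?thesis using Lim_transform_eventually by fastforce
qed

lemma head_eigenterm_negligible:
  assumes t: "t < r" and ltp: "lt t > 0"
    and u: "\<And>c. c \<le> r - 1 \<Longrightarrow> dotn n u (xpow c) = 0"
    and w: "\<And>c. c \<le> r - 1 \<Longrightarrow> dotn n w (xpow c) = 0"
  shows "((\<lambda>e. lam t e * pform t e u w / e ^ (2 * r - 1)) \<longlongrightarrow> 0) (at_right 0)"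
proof -
  have tn: "t < n" using t r_le_n by simp
  let ?N = "2 * r - 1"
  have lu: "((\<lambda>e. lam t e * pform t e u u / e ^ ?N) \<longlongrightarrow> 0) (at_right 0)" by (rule head_eigenterm_diag_negligible[OF t ltp u])
  have lw: "((\<lambda>e. lam t e * pform t e w w / e ^ ?N) \<longlongrightarrow> 0) (at_right 0)" by (rule head_eigenterm_diag_negligible[OF t ltp w])
  have s0: "((\<lambda>e. (lam t e * pform t e u u / e ^ ?N + lam t e * pform t e w w / e ^ ?N) / 2) \<longlongrightarrow> 0) (at_right 0)"
    by (intro tendsto_divide_zero tendsto_add_zero lu lw)
  show ?thesis
  proof (rule tendsto_0_le[OF s0, where K=1])
    show "eventually (\<lambda>e. norm (lam t e * pform t e u w / e ^ ?N) \<le>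
        norm ((lam t e * pform t e u u / e ^ ?N + lam t e * pform t e w w / e ^ ?N) / 2) * 1) (at_right 0)"
      using eventually_small
    proof (rule eventually_mono)
      fix e assume h: "0 < e \<and> e < \<delta> \<and> e \<le> \<epsilon>0"
      have ae: "\<bar>e\<bar> < \<delta>" using h by simp
      have l0: "lam t e \<ge> 0" using lam_nonneg[of e t] h tn by simp
      have eN: "e ^ ?N > 0" using h by simp
      have c: "\<bar>pform t e u w\<bar> \<le> (pform t e u u + pform t e w w) / 2" by (rule pform_abs_le[OF ae tn])
      have "\<bar>lam t e * pform t e u w / e ^ ?N\<bar> = lam t e * \<bar>pform t e u w\<bar> / e ^ ?N"
        using l0 eN by (simp add: abs_mult abs_divide)
      also have "\<dots> \<le> lam t e * ((pform t e u u + pform t e w w) / 2) / e ^ ?N"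
        using l0 eN c by (intro divide_right_mono mult_left_mono) auto
      also have "\<dots> = (lam t e * pform t e u u / e ^ ?N + lam t e * pform t e w w / e ^ ?N) / 2"
      proof -
        have eN0: "e \<noteq> 0" using h by simp
        show ?thesis using eN0 by (simp add: add_divide_distrib diff_divide_distrib ring_distribs)
      qed
      also have "\<dots> \<le> \<bar>(lam t e * pform t e u u / e ^ ?N + lam t e * pform t e w w / e ^ ?N) / 2\<bar>" by (rule abs_ge_self)
      finally show "norm (lam t e * pform t e u w / e ^ ?N) \<le>
        norm ((lam t e * pform t e u u / e ^ ?N + lam t e * pform t e w w / e ^ ?N) / 2) * 1" by simp
    qed
  qed
qed

lemma dpow_form_perp_eq_tail:
  assumes inj: "inj_on x {..<n}" and dW: "det (Wron f (r - 1)) \<noteq> 0"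
    and u: "\<And>c. c \<le> r - 1 \<Longrightarrow> dotn n u (xpow c) = 0"
    and w: "\<And>c. c \<le> r - 1 \<Longrightarrow> dotn n w (xpow c) = 0"
  shows "tcoef f (2 * r - 1) * dpow_form (2 * r - 1) u w =
    (\<Sum>t\<in>{r..<n}. lt t * (dotn n u (limvec t) * dotn n w (limvec t)))"
proof -
  let ?N = "2 * r - 1"
  let ?L = "\<Sum>t\<in>{r..<n}. lt t * (dotn n u (limvec t) * dotn n w (limvec t))"
  have "2 * (r - 1) + 1 = ?N" using r_ge1 by simp
  then have lim1: "((\<lambda>e. kform e u w / e ^ ?N) \<longlongrightarrow> tcoef f ?N * dpow_form ?N u w) (at_right 0)"
    using kform_perp_tendsto[of "r - 1" u w] r_ge1 u w by simp
  have head: "((\<lambda>e. \<Sum>t<r. lam t e * pform t e u w / e ^ ?N) \<longlongrightarrow> 0) (at_right 0)"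
    using tendsto_sum[of "{..<r}" "\<lambda>t e. lam t e * pform t e u w / e ^ ?N" "\<lambda>_. 0"]
      head_eigenterm_negligible[OF _ lt_pos_if_wronskian[OF inj r_ge1 order_refl dW] u w]
    by simp
  have tail: "((\<lambda>e. \<Sum>t\<in>{r..<n}. (lam t e / e ^ ?N) * pform t e u w) \<longlongrightarrow> ?L) (at_right 0)"
  proof (intro tendsto_sum tendsto_mult)
    fix t assume "t \<in> {r..<n}"
    then have t: "r \<le> t" "t < n" by auto
    then have "eig_order r t = ?N" unfolding eig_order_def by simp
    then show "((\<lambda>e. lam t e / e ^ ?N) \<longlongrightarrow> lt t) (at_right 0)"
      using lam_scaled_tendsto[OF t(2)] by simp
    show "((\<lambda>e. pform t e u w) \<longlongrightarrow> dotn n u (limvec t) * dotn n w (limvec t)) (at_right 0)"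
      by (rule pform_tendsto_right[OF t(2)])
  qed
  have "eventually (\<lambda>e. (\<Sum>t<r. lam t e * pform t e u w / e ^ ?N) +
      (\<Sum>t\<in>{r..<n}. (lam t e / e ^ ?N) * pform t e u w) = kform e u w / e ^ ?N) (at_right 0)"
    using eventually_small
  proof (rule eventually_mono)
    fix e assume "0 < e \<and> e < \<delta> \<and> e \<le> \<epsilon>0"
    then have "\<bar>e\<bar> < \<delta>" by simp
    then have "kform e u w / e ^ ?N = (\<Sum>t<n. lam t e * pform t e u w / e ^ ?N)"
      unfolding kform_eigen_expansion[OF \<open>\<bar>e\<bar> < \<delta>\<close>] by (simp add: sum_divide_distrib)
    then show "(\<Sum>t<r. lam t e * pform t e u w / e ^ ?N) +
        (\<Sum>t\<in>{r..<n}. (lam t e / e ^ ?N) * pform t e u w) = kform e u w / e ^ ?N"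
      using sum_lessThan_split[OF r_le_n, of "\<lambda>t. lam t e * pform t e u w / e ^ ?N"] by simp
  qed
  then have "((\<lambda>e. kform e u w / e ^ ?N) \<longlongrightarrow> 0 + ?L) (at_right 0)"
    by (rule Lim_transform_eventually[OF tendsto_add[OF head tail]])
  then show ?thesis using tendsto_unique[OF trivial_limit_at_right_real lim1] by simp
qed

lemma last_cols_Dpow_entry:
  assumes Q: "Q \<in> carrier_mat n n" and i: "i < n - r" and j: "j < n - r"
  shows "(transpose_mat (last_cols r Q) * Dpow n x m * last_cols r Q) $$ (i,j) =
    dpow_form m (\<lambda>a. Q $$ (a, r + i)) (\<lambda>a. Q $$ (a, r + j))"
proof -
  have "(transpose_mat (last_cols r Q) * Dpow n x m * last_cols r Q) $$ (i,j) =
      (\<Sum>a<n. (\<Sum>b<n. Q $$ (b, r + i) * \<bar>x b - x a\<bar> ^ m) * Q $$ (a, r + j))"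
    using i j Q by (simp add: last_cols_def scalar_prod_def Dpow_def atLeast0LessThan)
  also have "\<dots> = (\<Sum>a<n. \<Sum>b<n. Q $$ (b, r + i) * Q $$ (a, r + j) * \<bar>x b - x a\<bar> ^ m)"
    by (simp add: sum_distrib_left sum_distrib_right ac_simps)
  also have "\<dots> = dpow_form m (\<lambda>a. Q $$ (a, r + i)) (\<lambda>a. Q $$ (a, r + j))"
    unfolding dpow_form_def by (rule sum.swap)
  finally show ?thesis .
qed

definition tail_coeffs :: "real mat \<Rightarrow> real mat" where
  "tail_coeffs Q = Matrix.mat (n - r) (n - r) (\<lambda>(i,k). dotn n (\<lambda>a. Q $$ (a, r + i)) (limvec (r + k)))"

lemma perp_block_eq:
  assumes inj: "inj_on x {..<n}" and dW: "det (Wron f (r - 1)) \<noteq> 0"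
    and qr: "full_QR (Vand n x (r - 1)) Q"
  shows "tcoef f (2 * r - 1) \<cdot>\<^sub>m (transpose_mat (last_cols r Q) * Dpow n x (2 * r - 1) * last_cols r Q) =
    tail_coeffs Q * Matrix.mat (n - r) (n - r) (\<lambda>(i,j). if i = j then lt (r + i) else 0)
      * transpose_mat (tail_coeffs Q)"
proof -
  let ?m = "n - r" and ?N = "2 * r - 1" and ?q = "\<lambda>k a. Q $$ (a,k)"
  have Q: "Q \<in> carrier_mat n n" by (rule full_QR_props(1)[OF qr r_ge1 r_le_n])
  have perp: "dotn n (?q (r + i)) (xpow c) = 0" if "i < ?m" "c \<le> r - 1" for i c
    using that r_ge1 by (intro full_QR_tail_orthogonal_monomials[OF qr r_ge1 r_le_n]) auto
  have "tail_coeffs Q * Matrix.mat ?m ?m (\<lambda>(i,j). if i = j then lt (r + i) else 0)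
      * transpose_mat (tail_coeffs Q) = Matrix.mat ?m ?m (\<lambda>(i,j). \<Sum>k<?m.
        dotn n (?q (r + i)) (limvec (r + k)) * lt (r + k) * dotn n (?q (r + j)) (limvec (r + k)))"
    unfolding tail_coeffs_def
    by (rule mat_sum_diag_eq_mult[of ?m "\<lambda>i k. dotn n (?q (r + i)) (limvec (r + k))", symmetric])
  also have "\<dots> = tcoef f ?N \<cdot>\<^sub>m (transpose_mat (last_cols r Q) * Dpow n x ?N * last_cols r Q)"
  proof (rule eq_matI)
    fix i j assume "i < dim_row (tcoef f ?N \<cdot>\<^sub>m (transpose_mat (last_cols r Q) * Dpow n x ?N * last_cols r Q))"
      "j < dim_col (tcoef f ?N \<cdot>\<^sub>m (transpose_mat (last_cols r Q) * Dpow n x ?N * last_cols r Q))"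
    then have i: "i < ?m" and j: "j < ?m" using Q by (auto simp: last_cols_def)
    show "Matrix.mat ?m ?m (\<lambda>(i,j). \<Sum>k<?m. dotn n (?q (r + i)) (limvec (r + k)) * lt (r + k) *
          dotn n (?q (r + j)) (limvec (r + k))) $$ (i,j) =
        (tcoef f ?N \<cdot>\<^sub>m (transpose_mat (last_cols r Q) * Dpow n x ?N * last_cols r Q)) $$ (i,j)"
    proof -
      have "(\<Sum>k<?m. dotn n (?q (r + i)) (limvec (r + k)) * lt (r + k) * dotn n (?q (r + j)) (limvec (r + k))) =
          (\<Sum>t\<in>{r..<n}. lt t * (dotn n (?q (r + i)) (limvec t) * dotn n (?q (r + j)) (limvec t)))"
        by (simp add: sum_atLeastLessThan_shift[OF r_le_n] ac_simps)
      also have "\<dots> = tcoef f ?N * dpow_form ?N (?q (r + i)) (?q (r + j))"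
        using perp i j by (intro dpow_form_perp_eq_tail[OF inj dW, symmetric]) auto
      also have "\<dots> = (tcoef f ?N \<cdot>\<^sub>m (transpose_mat (last_cols r Q) * Dpow n x ?N * last_cols r Q)) $$ (i,j)"
        using i j Q last_cols_Dpow_entry[OF Q i j] by (simp add: last_cols_def Dpow_def)
      finally show ?thesis using i j by simp
    qed
  qed (use Q in \<open>auto simp: last_cols_def Dpow_def\<close>)
  finally show ?thesis ..
qed

lemma tail_coeffs_orthogonal:
  assumes inj: "inj_on x {..<n}" and dW: "det (Wron f (r - 1)) \<noteq> 0"
    and qr: "full_QR (Vand n x (r - 1)) Q"
  shows "transpose_mat (tail_coeffs Q) * tail_coeffs Q = 1\<^sub>m (n - r)"
proof (rule eq_matI)
  let ?m = "n - r" and ?q = "\<lambda>k a. Q $$ (a,k)"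
  fix k l assume "k < dim_row (1\<^sub>m ?m :: real mat)" "l < dim_col (1\<^sub>m ?m :: real mat)"
  then have k: "k < ?m" and l: "l < ?m" by auto
  let ?F = "\<lambda>a. dotn n (?q a) (limvec (r + k)) * dotn n (?q a) (limvec (r + l))"
  have "(transpose_mat (tail_coeffs Q) * tail_coeffs Q) $$ (k,l) = (\<Sum>i<?m. ?F (r + i))"
    using k l by (simp add: tail_coeffs_def scalar_prod_def atLeast0LessThan)
  also have "\<dots> = (\<Sum>a<n. ?F a)"
    using sum_lessThan_split[OF r_le_n, of ?F] sum_atLeastLessThan_shift[OF r_le_n, of ?F]
      QR_head_orthogonal_limvec_tail(1)[OF inj dW qr _ _ _, of _ "r + k"] k by simp
  also have "\<dots> = dotn n (limvec (r + k)) (limvec (r + l))"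
    by (rule orthonormal_basis_parseval[OF full_QR_props(2)[OF qr r_ge1 r_le_n], symmetric])
  also have "\<dots> = 1\<^sub>m ?m $$ (k,l)"
    using limvec_orthonormal_basis k l unfolding orthonormal_basis_def by simp
  finally show "(transpose_mat (tail_coeffs Q) * tail_coeffs Q) $$ (k,l) = 1\<^sub>m ?m $$ (k,l)" .
qed (auto simp: tail_coeffs_def)

lemma char_poly_perp_block:
  assumes inj: "inj_on x {..<n}" and dW: "det (Wron f (r - 1)) \<noteq> 0"
    and qr: "full_QR (Vand n x (r - 1)) Q"
  shows "char_poly (tcoef f (2 * r - 1) \<cdot>\<^sub>m
      (transpose_mat (last_cols r Q) * Dpow n x (2 * r - 1) * last_cols r Q)) = (\<Prod>s\<in>{r..<n}. [:- lt s, 1:])"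
proof -
  have "char_poly (tcoef f (2 * r - 1) \<cdot>\<^sub>m
      (transpose_mat (last_cols r Q) * Dpow n x (2 * r - 1) * last_cols r Q)) = (\<Prod>k<n - r. [:- lt (r + k), 1:])"
    by (rule char_poly_orthogonal_diag[OF _ tail_coeffs_orthogonal[OF inj dW qr] perp_block_eq[OF inj dW qr]])
      (simp add: tail_coeffs_def)
  moreover have "(\<Prod>s\<in>{0 + r..<(n - r) + r}. [:- lt s, 1:]) = (\<Prod>k\<in>{0..<n - r}. [:- lt (k + r), 1:])"
    by (rule prod.shift_bounds_nat_ivl)
  ultimately show ?thesis using r_le_n by (simp add: atLeast0LessThan add.commute)
qed

end

theorem theorem4p5:
  fixes f :: "real \<Rightarrow> real" and b :: real and r n :: nat and x :: "nat \<Rightarrow> real"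
    and \<epsilon>0 \<delta> :: real
    and lam :: "nat \<Rightarrow> real \<Rightarrow> real" and P :: "nat \<Rightarrow> real \<Rightarrow> real mat"
    and p :: "nat \<Rightarrow> real Matrix.vec" and lt :: "nat \<Rightarrow> real"
  assumes b_pos: "b > 0" and r_ge1: "r \<ge> 1"
    and f_smooth: "C_k_on (2*r) f {-b<..<b}"
    and f_odd0: "\<And>l. 1 \<le> l \<Longrightarrow> l < r \<Longrightarrow> (deriv ^^ (2*l - 1)) f 0 = 0"
    and f_odd_r: "(deriv ^^ (2*r - 1)) f 0 \<noteq> 0"
    and r_le_n: "r \<le> n"
    and eps0_pos: "\<epsilon>0 > 0"
    and K_psd: "\<And>\<epsilon>. 0 \<le> \<epsilon> \<Longrightarrow> \<epsilon> \<le> \<epsilon>0 \<Longrightarrow> psd_mat n (Kmat f n x \<epsilon>)"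
    and K_analytic: "mat_analytic_near0 n (Kmat f n x)"
    \<comment> \<open>analytic eigen-decomposition K_eps = sum_k lam_k(eps) P_k(eps) near 0\<close>
    and delta_pos: "\<delta> > 0"
    and lam_analytic: "\<And>k. k < n \<Longrightarrow> real_analytic_near0 (lam k)"
    and P_analytic: "\<And>k. k < n \<Longrightarrow> mat_analytic_near0 n (P k)"
    and P_rank1: "\<And>\<epsilon> k. \<bar>\<epsilon>\<bar> < \<delta> \<Longrightarrow> k < n \<Longrightarrow>
                    \<exists>v\<in>carrier_vec n. scalar_prod v v = 1 \<and> P k \<epsilon> = outer n v"
    and P_orth: "\<And>\<epsilon> k j. \<bar>\<epsilon>\<bar> < \<delta> \<Longrightarrow> k < n \<Longrightarrow> j < n \<Longrightarrow> k \<noteq> j \<Longrightarrow>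
                    P k \<epsilon> * P j \<epsilon> = 0\<^sub>m n n"
    and K_decomp: "\<And>\<epsilon> i j. \<bar>\<epsilon>\<bar> < \<delta> \<Longrightarrow> i < n \<Longrightarrow> j < n \<Longrightarrow>
                    Kmat f n x \<epsilon> $$ (i,j) = (\<Sum>k<n. lam k \<epsilon> * P k \<epsilon> $$ (i,j))"
    and lam_sorted: "\<And>\<epsilon> k. 0 < \<epsilon> \<Longrightarrow> \<epsilon> < \<delta> \<Longrightarrow> Suc k < n \<Longrightarrow> lam (Suc k) \<epsilon> \<le> lam k \<epsilon>"
    \<comment> \<open>limiting eigenvectors\<close>
    and p_unit: "\<And>k. k < n \<Longrightarrow> p k \<in> carrier_vec n \<and> scalar_prod (p k) (p k) = 1"
    and p_limit: "\<And>k. k < n \<Longrightarrow> P k 0 = outer n (p k)"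
    \<comment> \<open>lam_s(eps) = eps^(e_s) (lt_s + O(eps)) as eps -> 0+, 0-based s\<close>
    and lam_asymp: "\<And>s. s < n \<Longrightarrow> \<exists>C \<eta>. \<eta> > 0 \<and> (\<forall>\<epsilon>. 0 < \<epsilon> \<and> \<epsilon> < \<eta> \<longrightarrow>
          \<bar>lam s \<epsilon> - \<epsilon> ^ eig_order r s * lt s\<bar>
            \<le> C * \<epsilon> ^ (eig_order r s + 1))"
  shows
    "(\<forall>s. 1 \<le> s \<and> s \<le> r \<longrightarrow>
        (\<Prod>t<s. lt t) = det (transpose_mat (Vand n x (s-1)) * Vand n x (s-1)) * det (Wron f (s-1)))
   \<and> (\<forall>s. 1 < s \<and> s \<le> r \<and> det (Wron f (s-2)) \<noteq> 0 \<longrightarrow>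
        lt (s-1) = det (transpose_mat (Vand n x (s-1)) * Vand n x (s-1))
                     / det (transpose_mat (Vand n x (s-2)) * Vand n x (s-2))
                   * (det (Wron f (s-1)) / det (Wron f (s-2))))
   \<and> (inj_on x {..<n} \<longrightarrow>
        (\<forall>s. 1 \<le> s \<and> s \<le> r \<and> det (Wron f (s-1)) \<noteq> 0 \<longrightarrow>
           (\<forall>Q. full_QR (Vand n x (s-1)) Q \<longrightarrow>
              (\<forall>k<s. p k = col Q k \<or> p k = - col Q k)))
      \<and> (det (Wron f (r-1)) \<noteq> 0 \<longrightarrow>
           (\<forall>Q. full_QR (Vand n x (r-1)) Q \<longrightarrow>
              col_space (mat_of_cols n (map p [r..<n])) = col_space (last_cols r Q))))
   \<and> (det (Wron f (r-1)) \<noteq> 0 \<and> inj_on x {..<n} \<longrightarrow>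
        (\<forall>Q. full_QR (Vand n x (r-1)) Q \<longrightarrow>
           char_poly (tcoef f (2*r-1) \<cdot>\<^sub>m
              (transpose_mat (last_cols r Q) * Dpow n x (2*r-1) * last_cols r Q))
           = (\<Prod>s\<in>{r..<n}. [:- lt s, 1:])))"
proof -
  \<comment> \<open>The orders of the eigenvalues enter only through \<open>lam_asymp\<close>, and analyticity is only needed
    for the projectors.\<close>
  interpret kernel_eigen_expansion f b r n x \<epsilon>0 \<delta> lam P p lt
    by (rule kernel_eigen_expansion.intro) (fact assms)+
  show ?thesis
    using eigenvalue_product eigenvalue_ratio limvec_eq_QR_col col_space_limvecs_eq char_poly_perp_block
    by (intro conjI allI impI) (simp_all, blast+)
qed

end
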